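(* In the hard-instance construction, fix $k\in[r-1]$, a sub-hypercube $H$ of $\{0,1\}^n$, and any realization of $S_1,B_1,v_1,\dots,S_{k-1},B_{k-1},v_{k-1}$. Then, for all sufficiently large $n$, with probability at least $1-3n^{-(c+5/3)}$ over the random partition of $S_k\cup\dots\cup S_r$ and the randomness of $B_k,v_k,\dots,B_r,v_r$, $$\mu(H)=\Big(\prod_{i\in[k]}\mu_i(H_{S_i})\Big)\cdot 2^{-\mathrm{codim}(H)+\mathrm{codim}(H_{S_1\cup\dots\cup S_k})+\sum_{i>k}a_i}.$$
   Context: $\log$ is base $2$. Hard-instance construction: fix $c>0$; let $r=\frac14\big(\frac{n}{(c+2)\log n}\big)^{1/3}$, $m=n/r=4n^{2/3}((c+2)\log n)^{1/3}$, and $a_i=12\,i\,n^{1/3}((c+2)\log n)^{2/3}$ for $i\in[r]$ (assumed integers). Partition $[n]$ uniformly at random into blocks $S_1,\dots,S_r$ of size $m$. For each $i$ independently, choose $B_i\in\{0,1\}^{(m-a_i)\times m}$ and $v_i\in\{0,1\}^{m-a_i}$ uniformly at random and set $\mu_i(x)=\mathbf 1[B_ix=v_i]$ for $x\in\{0,1\}^{S_i}$ (over $\mathbb F_2$); let $\mu(x)=\prod_{i\in[r]}\mu_i(x_{S_i})$ for $x\in\{0,1\}^n$. A sub-hypercube is $H=\{x\in\{0,1\}^n:x_S=y\}$ with $S\subseteq[n]$, $y\in\{0,1\}^S$; $\mathrm{codim}(H)=|S|$; for $U\subseteq[n]$, $H_U=\{x\in\{0,1\}^U:x_{S\cap U}=y_{S\cap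 U}\}$ with $\mathrm{codim}(H_U)=|S\cap U|$; $\mu(H)=\sum_{x\in H}\mu(x)$ and $\mu_i(H_{S_i})=\sum_{x\in H_{S_i}}\mu_i(x)$. *)

theory Defs
  imports "HOL-Probability.Probability"
begin

definition hi_r :: "real \<Rightarrow> nat \<Rightarrow> real" where
  "hi_r c n = (1/4) * (real n / ((c + 2) * log 2 (real n))) powr (1/3)"

definition hi_m :: "real \<Rightarrow> nat \<Rightarrow> real" where
  "hi_m c n = 4 * real n powr (2/3) * ((c + 2) * log 2 (real n)) powr (1/3)"

definition hi_a :: "real \<Rightarrow> nat \<Rightarrow> nat \<Rightarrow> real" where
  "hi_a c n i = 12 * real i * real n powr (1/3) * ((c + 2) * log 2 (real n)) powr (2/3)"

section \<open>Configurations: ordered partition S_1..S_r of [n] = {1..n} into blocks of size m,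
  matrices B_i (rows j < m - a_i, columns indexed by the elements of S_i) and vectors v_i,
  all over F_2 = bool, encoded extensionally (False outside their index domain).\<close>

type_synonym config = "(nat \<Rightarrow> nat set) \<times> (nat \<Rightarrow> nat \<Rightarrow> nat \<Rightarrow> bool) \<times> (nat \<Rightarrow> nat \<Rightarrow> bool)"

definition cS :: "config \<Rightarrow> nat \<Rightarrow> nat set" where "cS \<omega> = fst \<omega>"
definition cB :: "config \<Rightarrow> nat \<Rightarrow> nat \<Rightarrow> nat \<Rightarrow> bool" where "cB \<omega> = fst (snd \<omega>)"
definition cv :: "config \<Rightarrow> nat \<Rightarrow> nat \<Rightarrow> bool" where "cv \<omega> = snd (snd \<omega>)"

definition block_partitions :: "nat \<Rightarrow> nat \<Rightarrow> nat \<Rightarrow> (nat \<Rightarrow> nat set) set" where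
  "block_partitions n r m = {S.
      (\<forall>i\<in>{1..r}. S i \<subseteq> {1..n} \<and> card (S i) = m)
    \<and> (\<forall>i\<in>{1..r}. \<forall>j\<in>{1..r}. i \<noteq> j \<longrightarrow> S i \<inter> S j = {})
    \<and> (\<Union>i\<in>{1..r}. S i) = {1..n}
    \<and> (\<forall>i. i \<notin> {1..r} \<longrightarrow> S i = {})}"

definition configs :: "nat \<Rightarrow> nat \<Rightarrow> nat \<Rightarrow> (nat \<Rightarrow> nat) \<Rightarrow> config set" where
  "configs n r m a = {\<omega>.
      cS \<omega> \<in> block_partitions n r m
    \<and> (\<forall>i j l. cB \<omega> i j l \<longrightarrow> i \<in> {1..r} \<and> j < m - a i \<and> l \<in> cS \<omega> i)
    \<and> (\<forall>i j. cv \<omega> i j \<longrightarrow> i \<in> {1..r} \<and> j < m - a i)}"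

definition configs_given :: "nat \<Rightarrow> nat \<Rightarrow> nat \<Rightarrow> (nat \<Rightarrow> nat) \<Rightarrow> nat \<Rightarrow> config \<Rightarrow> config set" where
  "configs_given n r m a k \<omega>0 = {\<omega> \<in> configs n r m a.
      \<forall>i\<in>{1..<k}. cS \<omega> i = cS \<omega>0 i \<and> cB \<omega> i = cB \<omega>0 i \<and> cv \<omega> i = cv \<omega>0 i}"

text \<open>mu_i(x) = 1 iff B_i x = v_i over F_2 (x only read on S_i).\<close>
definition block_sat :: "nat \<Rightarrow> (nat \<Rightarrow> nat) \<Rightarrow> config \<Rightarrow> nat \<Rightarrow> (nat \<Rightarrow> bool) \<Rightarrow> bool" where
  "block_sat m a \<omega> i x \<longleftrightarrow>
     (\<forall>j < m - a i. odd (card {l \<in> cS \<omega> i. cB \<omega> i j l \<and> x l}) = cv \<omega> i j)"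

text \<open>mu(H) for H = {x : x_HS = y}.\<close>
definition muH :: "nat \<Rightarrow> nat \<Rightarrow> nat \<Rightarrow> (nat \<Rightarrow> nat) \<Rightarrow> config \<Rightarrow> nat set \<Rightarrow> (nat \<Rightarrow> bool) \<Rightarrow> real" where
  "muH n r m a \<omega> HS y = real (card {x \<in> {1..n} \<rightarrow>\<^sub>E (UNIV :: bool set).
      (\<forall>l\<in>HS. x l = y l) \<and> (\<forall>i\<in>{1..r}. block_sat m a \<omega> i x)})"

definition muiH :: "nat \<Rightarrow> (nat \<Rightarrow> nat) \<Rightarrow> config \<Rightarrow> nat \<Rightarrow> nat set \<Rightarrow> (nat \<Rightarrow> bool) \<Rightarrow> real" where
  "muiH m a \<omega> i HS y = real (card {x \<in> cS \<omega> i \<rightarrow>\<^sub>E (UNIV :: bool set).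
      (\<forall>l\<in>HS \<inter> cS \<omega> i. x l = y l) \<and> block_sat m a \<omega> i x})"

end

theory Submission
  imports Defs
begin

text \<open>Write h_i = |H \<inter> S_i| for the number of coordinates of block i fixed by H. The factor
  \<mu>_i(H_{S_i}) counts the points of an (m - h_i)-dimensional subcube satisfying m - a_i affine
  equations over F_2; a character sum shows it equals 2^(a_i - h_i) as soon as no nonzero
  combination of the equations vanishes on the free coordinates, and for uniformly random B_i
  this fails with probability at most 2^(-T) when h_i + T \<le> a_i. Since \<mu>(H) is the product of
  the \<mu>_i(H_{S_i}), it suffices that all blocks i > k are exact. If \<mu>_k(H) \<noteq> 0 then, v_k being
  uniform, h_k < a_k + T up to probability 2^(-T); re-splitting S_k \<union> S_i uniformly, a
  hypergeometric tail bound gives h_i \<le> h_k + a_1 - 2T up to probability n^(-(c+2)). As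
  a_i \<ge> a_k + a_1, this yields h_i + T \<le> a_i, and a union bound over the r \<le> n^(1/3) blocks
  with T = \<lceil>(c+2) log n\<rceil> gives the failure probability 3 n^(-(c+5/3)).\<close>

section \<open>Character sums over F_2\<close>

definition bool_sign :: "bool \<Rightarrow> real" where "bool_sign b = (if b then -1 else 1)"

lemma neg_one_power_card_eq_prod:
  assumes "finite A"
  shows "(-1::real) ^ card {a\<in>A. P a} = (\<Prod>a\<in>A. bool_sign (P a))"
proof -
  have "(\<Prod>a\<in>A. bool_sign (P a)) = (\<Prod>a\<in>{a\<in>A. P a}. (-1::real))"
    using prod.inter_filter[OF assms, of "\<lambda>_. -1::real" P] by (simp add: bool_sign_def)
  then show ?thesis by simp
qed

lemma character_sum_vanishes:
  assumes fin: "finite I" and FI: "F \<subseteq> I" and l0: "l0 \<in> F" and z: "z l0"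
  shows "(\<Sum>x\<in>{x\<in>I \<rightarrow>\<^sub>E (UNIV::bool set). \<forall>l\<in>I-F. x l = y l}.
            (-1::real) ^ card {l\<in>I. z l \<and> x l}) = 0"
proof -
  define X where "X = {x\<in>I \<rightarrow>\<^sub>E (UNIV::bool set). \<forall>l\<in>I-F. x l = y l}"
  define \<sigma> where "\<sigma> x = x(l0 := \<not> x l0)" for x :: "'a \<Rightarrow> bool"
  define f where "f x = (-1::real) ^ card {l\<in>I. z l \<and> x l}" for x
  have l0I: "l0 \<in> I" using l0 FI by auto
  have sX: "\<sigma> x \<in> X" if "x \<in> X" for x
    using that l0I l0 unfolding X_def \<sigma>_def by (auto simp: PiE_def extensional_def)
  have ss: "\<sigma> (\<sigma> x) = x" for x unfolding \<sigma>_def by auto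
  have bij: "bij_betw \<sigma> X X"
    by (rule bij_betw_byWitness[where f'=\<sigma>]) (use sX ss in auto)
  have neg: "f (\<sigma> x) = - f x" for x
  proof (cases "x l0")
    case True
    have eq: "{l\<in>I. z l \<and> \<sigma> x l} = {l\<in>I. z l \<and> x l} - {l0}"
      using True unfolding \<sigma>_def by auto
    have "card {l\<in>I. z l \<and> x l} = Suc (card ({l\<in>I. z l \<and> x l} - {l0}))"
      using True z l0I fin by (intro card_Suc_Diff1[symmetric]) auto
    then show ?thesis unfolding f_def eq by simp
  next
    case False
    have eq: "{l\<in>I. z l \<and> x l} = {l\<in>I. z l \<and> \<sigma> x l} - {l0}"
      using False unfolding \<sigma>_def by auto
    have "card {l\<in>I. z l \<and> \<sigma> x l} = Suc (card ({l\<in>I. z l \<and> \<sigma> x l} - {l0}))"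
      using False z l0I fin by (intro card_Suc_Diff1[symmetric]) (auto simp: \<sigma>_def)
    then show ?thesis unfolding f_def eq by simp
  qed
  have "sum f X = sum (\<lambda>x. f (\<sigma> x)) X"
    using sum.reindex_bij_betw[OF bij, of f] by simp
  also have "\<dots> = - sum f X" by (simp add: neg sum_negf)
  finally have "sum f X = 0" by simp
  then show ?thesis unfolding X_def f_def .
qed

lemma character_sum_indicator:
  assumes fin: "finite J"
  shows "(\<Sum>u\<in>J \<rightarrow>\<^sub>E (UNIV::bool set). (-1::real) ^ card {j\<in>J. u j \<and> z j})
         = (if \<forall>j\<in>J. \<not> z j then 2 ^ card J else 0)"
proof (cases "\<forall>j\<in>J. \<not> z j")
  case True
  then have e: "\<And>u. {j\<in>J. u j \<and> z j} = {}" by auto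
  have "(\<Sum>u\<in>J \<rightarrow>\<^sub>E (UNIV::bool set). (-1::real) ^ card {j\<in>J. u j \<and> z j})
        = (\<Sum>u\<in>J \<rightarrow>\<^sub>E (UNIV::bool set). 1)" by (rule sum.cong) (simp_all only: e card.empty power_0)
  also have "\<dots> = real (card (J \<rightarrow>\<^sub>E (UNIV::bool set)))" by simp
  also have "\<dots> = 2 ^ card J" using fin by (simp add: card_PiE)
  finally show ?thesis using True by simp
next
  case False
  then obtain j0 where j0: "j0 \<in> J" "z j0" by auto
  have eq: "J \<rightarrow>\<^sub>E (UNIV::bool set) = {x\<in>J \<rightarrow>\<^sub>E (UNIV::bool set). \<forall>l\<in>J-J. x l = y l}" for y by auto
  show ?thesis
    using character_sum_vanishes[of J J j0 z undefined, OF fin subset_refl j0(1) j0(2)] False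
    by (subst eq[of undefined]) (simp add: conj_commute)
qed

lemma bool_sign_odd: "bool_sign (odd c) = (-1::real) ^ c"
  by (cases "even c") (simp_all add: bool_sign_def)

lemma sign_affine_parity_transpose:
  assumes fin: "finite S"
  shows "(-1::real) ^ card {j\<in>{..<(R::nat)}. u j \<and> (odd (card {l\<in>S. B j l \<and> x l}) \<noteq> v j)}
    = (-1) ^ card {j\<in>{..<R}. u j \<and> v j} *
      (-1) ^ card {l\<in>S. odd (card {j\<in>{..<R}. u j \<and> B j l}) \<and> x l}"
proof -
  define c where "c j = card {l\<in>S. B j l \<and> x l}" for j
  have "(-1::real) ^ card {j\<in>{..<R}. u j \<and> (odd (c j) \<noteq> v j)}
      = (\<Prod>j\<in>{..<R}. bool_sign (u j \<and> v j) * bool_sign (u j \<and> odd (c j)))"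
  proof -
    have "(-1::real) ^ card {j\<in>{..<R}. u j \<and> (odd (c j) \<noteq> v j)} = (\<Prod>j\<in>{..<R}. bool_sign (u j \<and> (odd (c j) \<noteq> v j)))"
      by (rule neg_one_power_card_eq_prod) simp
    also have "\<dots> = (\<Prod>j\<in>{..<R}. bool_sign (u j \<and> v j) * bool_sign (u j \<and> odd (c j)))"
      by (rule prod.cong) (auto simp: bool_sign_def)
    finally show ?thesis .
  qed
  also have "\<dots> = (\<Prod>j\<in>{..<R}. bool_sign (u j \<and> v j)) * (\<Prod>j\<in>{..<R}. bool_sign (u j \<and> odd (c j)))"
    by (rule prod.distrib)
  also have "(\<Prod>j\<in>{..<R}. bool_sign (u j \<and> odd (c j))) = (\<Prod>j\<in>{..<R}. \<Prod>l\<in>S. bool_sign (u j \<and> B j l \<and> x l))"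
  proof (rule prod.cong)
    fix j
    show "bool_sign (u j \<and> odd (c j)) = (\<Prod>l\<in>S. bool_sign (u j \<and> B j l \<and> x l))"
    proof (cases "u j")
      case True
      then show ?thesis using neg_one_power_card_eq_prod[OF fin, of "\<lambda>l. B j l \<and> x l"]
        by (simp add: bool_sign_odd c_def)
    next
      case False
      then show ?thesis by (simp add: bool_sign_def)
    qed
  qed simp
  also have "\<dots> = (\<Prod>l\<in>S. \<Prod>j\<in>{..<R}. bool_sign (u j \<and> B j l \<and> x l))"
    by (rule prod.swap)
  also have "\<dots> = (\<Prod>l\<in>S. bool_sign (odd (card {j\<in>{..<R}. u j \<and> B j l}) \<and> x l))"
  proof (rule prod.cong)
    fix l
    show "(\<Prod>j\<in>{..<R}. bool_sign (u j \<and> B j l \<and> x l)) = bool_sign (odd (card {j\<in>{..<R}. u j \<and> B j l}) \<and> x l)"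
    proof (cases "x l")
      case True
      then show ?thesis using neg_one_power_card_eq_prod[of "{..<R}" "\<lambda>j. u j \<and> B j l"]
        by (simp add: bool_sign_odd)
    next
      case False
      then show ?thesis by (simp add: bool_sign_def)
    qed
  qed simp
  also have "\<dots> = (-1) ^ card {l\<in>S. odd (card {j\<in>{..<R}. u j \<and> B j l}) \<and> x l}"
    by (rule neg_one_power_card_eq_prod[OF fin, symmetric])
  also have "(\<Prod>j\<in>{..<R}. bool_sign (u j \<and> v j)) = (-1) ^ card {j\<in>{..<R}. u j \<and> v j}"
    by (rule neg_one_power_card_eq_prod[symmetric]) simp
  finally show ?thesis unfolding c_def .
qed

lemma card_subcube:
  assumes fin: "finite S"
  shows "card {x\<in>S \<rightarrow>\<^sub>E (UNIV::bool set). \<forall>l\<in>HS\<inter>S. x l = y l} = 2 ^ card (S - HS)"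
proof -
  have eq: "{x\<in>S \<rightarrow>\<^sub>E (UNIV::bool set). \<forall>l\<in>HS\<inter>S. x l = y l}
      = PiE S (\<lambda>l. if l \<in> HS then {y l} else UNIV)"
    by (auto simp: PiE_def Pi_def split: if_splits)
  have "card (PiE S (\<lambda>l. if l \<in> HS then {y l} else (UNIV::bool set)))
      = (\<Prod>l\<in>S. card (if l \<in> HS then {y l} else (UNIV::bool set)))"
    by (rule card_PiE[OF fin])
  also have "\<dots> = (\<Prod>l\<in>S. if l \<notin> HS then 2 else 1)"
    by (rule prod.cong) auto
  also have "\<dots> = (\<Prod>l\<in>{l\<in>S. l \<notin> HS}. 2)"
    by (rule prod.inter_filter[OF fin, symmetric])
  also have "{l\<in>S. l \<notin> HS} = S - HS" by auto
  finally show ?thesis using eq by simp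
qed

text \<open>Summing the characters (-1)^<u, Bx + v> over all u \<in> F_2^R detects the solutions of
  Bx = v; under the hypothesis every u \<noteq> 0 contributes zero.\<close>
lemma card_affine_solutions_subcube:
  fixes S HS :: "nat set" and B :: "nat \<Rightarrow> nat \<Rightarrow> bool" and v :: "nat \<Rightarrow> bool" and R :: nat
  assumes fin: "finite S"
    and K: "\<forall>u\<in>{..<R} \<rightarrow>\<^sub>E (UNIV::bool set). (\<exists>j<R. u j) \<longrightarrow>
              (\<exists>l\<in>S-HS. odd (card {j\<in>{..<R}. u j \<and> B j l}))"
  shows "real (card {x\<in>S \<rightarrow>\<^sub>E (UNIV::bool set). (\<forall>l\<in>HS\<inter>S. x l = y l) \<and>
            (\<forall>j<R. odd (card {l\<in>S. B j l \<and> x l}) = v j)}) * 2 ^ R = 2 ^ card (S - HS)"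
proof -
  define X where "X = {x\<in>S \<rightarrow>\<^sub>E (UNIV::bool set). \<forall>l\<in>HS\<inter>S. x l = y l}"
  define sat where "sat x = (\<forall>j<R. odd (card {l\<in>S. B j l \<and> x l}) = v j)" for x
  define U where "U = {..<R} \<rightarrow>\<^sub>E (UNIV::bool set)"
  define u0 where "u0 = (\<lambda>j::nat. if j < R then False else undefined)"
  define trm where "trm u x = (-1::real) ^ card {j\<in>{..<R}. u j \<and> (odd (card {l\<in>S. B j l \<and> x l}) \<noteq> v j)}" for u x
  have finX: "finite X" unfolding X_def using fin by (intro finite_subset[OF _ finite_PiE[OF fin, of "\<lambda>_. UNIV::bool set"]]) auto
  have finU: "finite U" unfolding U_def by (auto intro: finite_PiE)
  have X2: "X = {x\<in>S \<rightarrow>\<^sub>E (UNIV::bool set). \<forall>l\<in>S-(S-HS). x l = y l}" unfolding X_def by auto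
  have "real (card {x\<in>X. sat x}) * 2 ^ R = (\<Sum>x\<in>X. if sat x then 2 ^ R else 0)"
    using finX by (simp add: sum.If_cases Int_def)
  also have "\<dots> = (\<Sum>x\<in>X. \<Sum>u\<in>U. trm u x)"
  proof (rule sum.cong)
    fix x
    have "(\<Sum>u\<in>U. trm u x) = (if \<forall>j\<in>{..<R}. \<not> (odd (card {l\<in>S. B j l \<and> x l}) \<noteq> v j) then 2 ^ card {..<R} else 0)"
      unfolding U_def trm_def by (rule character_sum_indicator) simp
    then show "(if sat x then 2 ^ R else 0) = (\<Sum>u\<in>U. trm u x)" unfolding sat_def by auto
  qed simp
  also have "\<dots> = (\<Sum>u\<in>U. \<Sum>x\<in>X. trm u x)" by (rule sum.swap)
  also have "\<dots> = (\<Sum>u\<in>U. if u = u0 then 2 ^ card (S - HS) else 0)"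
  proof (rule sum.cong)
    fix u assume uU: "u \<in> U"
    have "(\<Sum>x\<in>X. trm u x) = (\<Sum>x\<in>X. (-1) ^ card {j\<in>{..<R}. u j \<and> v j} *
        (-1) ^ card {l\<in>S. odd (card {j\<in>{..<R}. u j \<and> B j l}) \<and> x l})"
      unfolding trm_def by (rule sum.cong) (rule refl, rule sign_affine_parity_transpose[OF fin])
    also have "\<dots> = (-1) ^ card {j\<in>{..<R}. u j \<and> v j} *
        (\<Sum>x\<in>X. (-1) ^ card {l\<in>S. odd (card {j\<in>{..<R}. u j \<and> B j l}) \<and> x l})"
      by (simp add: sum_distrib_left)
    finally have eq: "(\<Sum>x\<in>X. trm u x) = \<dots>" .
    show "(\<Sum>x\<in>X. trm u x) = (if u = u0 then 2 ^ card (S - HS) else 0)"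
    proof (cases "u = u0")
      case True
      have e1: "\<And>x. {l\<in>S. odd (card {j\<in>{..<R}. u j \<and> B j l}) \<and> x l} = {}"
        using True by (auto simp: u0_def)
      have e2: "{j\<in>{..<R}. u j \<and> v j} = {}" using True by (auto simp: u0_def)
      have "(\<Sum>x\<in>X. trm u x) = real (card X)" using eq[unfolded e1 e2] by simp
      also have "\<dots> = 2 ^ card (S - HS)" unfolding X_def using card_subcube[OF fin] by simp
      finally show ?thesis using True by simp
    next
      case False
      have "\<exists>j<R. u j"
      proof (rule ccontr)
        assume "\<not> (\<exists>j<R. u j)"
        then have "u = u0" using uU unfolding U_def u0_def by (auto simp: PiE_def extensional_def)
        then show False using False by simp
      qed
      then obtain l0 where l0: "l0 \<in> S - HS" "odd (card {j\<in>{..<R}. u j \<and> B j l0})"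
        using K uU unfolding U_def by blast
      have "(\<Sum>x\<in>X. (-1::real) ^ card {l\<in>S. odd (card {j\<in>{..<R}. u j \<and> B j l}) \<and> x l}) = 0"
        unfolding X2 by (rule character_sum_vanishes[OF fin _ l0(1)]) (use l0 in auto)
      then show ?thesis using eq False by simp
    qed
  qed simp
  also have "\<dots> = 2 ^ card (S - HS)"
  proof -
    have "u0 \<in> U" unfolding U_def u0_def by auto
    then show ?thesis using finU by (simp add: sum.delta')
  qed
  finally show ?thesis unfolding X_def sat_def by simp
qed

section \<open>Matrices with dependent rows\<close>

lemma card_filter_lessThan_remove:
  assumes "j0 < (R::nat)"
  shows "card {j\<in>{..<R}. P j} = card {j\<in>{..<R}-{j0}. P j} + (if P j0 then 1 else 0)"
proof (cases "P j0")
  case True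
  have "{j\<in>{..<R}. P j} = insert j0 {j\<in>{..<R}-{j0}. P j}" using True assms by auto
  then show ?thesis using True by simp
next
  case False
  then have "{j\<in>{..<R}. P j} = {j\<in>{..<R}-{j0}. P j}" by auto
  then show ?thesis using False by simp
qed

lemma card_matrices_annihilated_by:
  fixes F :: "nat set"
  assumes fin: "finite F" and j0: "j0 < R" "u j0"
  shows "card {M \<in> Pow ({..<R} \<times> F). \<forall>l\<in>F. even (card {j\<in>{..<R}. u j \<and> (j,l)\<in>M})}
         \<le> 2 ^ ((R-1) * card F)"
proof -
  define G where "G = {M \<in> Pow ({..<R} \<times> F). \<forall>l\<in>F. even (card {j\<in>{..<R}. u j \<and> (j,l)\<in>M})}"
  define \<rho> where "\<rho> M = M \<inter> (({..<R}-{j0}) \<times> F)" for M :: "(nat\<times>nat) set"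
  have inj: "inj_on \<rho> G"
  proof (rule inj_onI)
    fix M1 M2 assume M1: "M1 \<in> G" and M2: "M2 \<in> G" and eq: "\<rho> M1 = \<rho> M2"
    have j0l: "(j0,l) \<in> M1 \<longleftrightarrow> (j0,l) \<in> M2" if l: "l \<in> F" for l
    proof -
      have same: "{j\<in>{..<R}-{j0}. u j \<and> (j,l)\<in>M1} = {j\<in>{..<R}-{j0}. u j \<and> (j,l)\<in>M2}"
      proof -
        have "\<And>j. j \<in> {..<R}-{j0} \<Longrightarrow> (j,l)\<in>M1 \<longleftrightarrow> (j,l)\<in>M2"
          using eq l unfolding \<rho>_def by blast
        then show ?thesis by auto
      qed
      have e1: "even (card {j\<in>{..<R}. u j \<and> (j,l)\<in>M1})" using M1 l unfolding G_def by auto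
      have e2: "even (card {j\<in>{..<R}. u j \<and> (j,l)\<in>M2})" using M2 l unfolding G_def by auto
      show ?thesis
        using e1 e2 card_filter_lessThan_remove[OF j0(1), of "\<lambda>j. u j \<and> (j,l)\<in>M1"]
          card_filter_lessThan_remove[OF j0(1), of "\<lambda>j. u j \<and> (j,l)\<in>M2"] same j0(2)
        by (auto split: if_splits)
    qed
    show "M1 = M2"
    proof (rule set_eqI)
      fix p :: "nat \<times> nat"
      obtain j l where p: "p = (j,l)" by fastforce
      show "p \<in> M1 \<longleftrightarrow> p \<in> M2"
      proof (cases "j = j0")
        case True
        show ?thesis
        proof (cases "l \<in> F")
          case True
          then show ?thesis using j0l p \<open>j = j0\<close> by simp
        next
          case False
          then show ?thesis using M1 M2 p unfolding G_def by auto
        qed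
      next
        case False
        then show ?thesis using eq M1 M2 p unfolding \<rho>_def G_def by blast
      qed
    qed
  qed
  have sub: "\<rho> ` G \<subseteq> Pow (({..<R}-{j0}) \<times> F)" unfolding \<rho>_def by auto
  have "card G = card (\<rho> ` G)" using inj by (simp add: card_image)
  also have "\<dots> \<le> card (Pow (({..<R}-{j0}) \<times> F))"
    by (rule card_mono) (use fin sub in auto)
  also have "\<dots> = 2 ^ ((R-1) * card F)"
    using fin j0 by (simp add: card_Pow card_cartesian_product)
  finally show ?thesis unfolding G_def .
qed

lemma card_matrices_dependent_rows:
  fixes F :: "nat set"
  assumes fin: "finite F"
  shows "card {M \<in> Pow ({..<R} \<times> F). \<exists>u\<in>{..<R} \<rightarrow>\<^sub>E (UNIV::bool set). (\<exists>j<R. u j) \<and>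
            (\<forall>l\<in>F. even (card {j\<in>{..<R}. u j \<and> (j,l)\<in>M}))}
         \<le> 2 ^ R * 2 ^ ((R-1) * card F)"
proof -
  define U where "U = {..<R} \<rightarrow>\<^sub>E (UNIV::bool set)"
  define G where "G u = {M \<in> Pow ({..<R} \<times> F). \<forall>l\<in>F. even (card {j\<in>{..<R}. u j \<and> (j,l)\<in>M})}" for u
  have finU: "finite U" unfolding U_def by (auto intro: finite_PiE)
  have "{M \<in> Pow ({..<R} \<times> F). \<exists>u\<in>U. (\<exists>j<R. u j) \<and>
            (\<forall>l\<in>F. even (card {j\<in>{..<R}. u j \<and> (j,l)\<in>M}))} \<subseteq> (\<Union>u\<in>{u\<in>U. \<exists>j<R. u j}. G u)"
    unfolding G_def by auto
  then have "card {M \<in> Pow ({..<R} \<times> F). \<exists>u\<in>U. (\<exists>j<R. u j) \<and>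
            (\<forall>l\<in>F. even (card {j\<in>{..<R}. u j \<and> (j,l)\<in>M}))} \<le> card (\<Union>u\<in>{u\<in>U. \<exists>j<R. u j}. G u)"
    by (rule card_mono[rotated]) (use finU fin in \<open>auto simp: G_def\<close>)
  also have "\<dots> \<le> (\<Sum>u\<in>{u\<in>U. \<exists>j<R. u j}. card (G u))"
    by (rule card_UN_le) (use finU in auto)
  also have "\<dots> \<le> (\<Sum>u\<in>{u\<in>U. \<exists>j<R. u j}. 2 ^ ((R-1) * card F))"
    by (rule sum_mono) (use card_matrices_annihilated_by[OF fin] in \<open>auto simp: G_def\<close>)
  also have "\<dots> \<le> card U * 2 ^ ((R-1) * card F)"
    using card_mono[OF finU, of "{u\<in>U. \<exists>j<R. u j}"] by simp
  also have "card U = 2 ^ R" unfolding U_def by (simp add: card_PiE)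
  finally show ?thesis unfolding U_def .
qed

section \<open>A hypergeometric tail bound\<close>

lemma binomial_Suc_mult: "(n choose Suc k) * Suc k = (n choose k) * (n - k)"
  by (metis binomial_absorb_comp binomial_absorption mult.commute)

lemma card_subsets_containing:
  assumes fin: "finite U" and T: "T \<subseteq> U" "card T = t" and tm: "t \<le> m"
  shows "card {Q. Q \<subseteq> U \<and> card Q = m \<and> T \<subseteq> Q} = (card U - t) choose (m - t)"
proof -
  have finT: "finite T" using T fin finite_subset by auto
  have "bij_betw (\<lambda>Q. Q - T) {Q. Q \<subseteq> U \<and> card Q = m \<and> T \<subseteq> Q} {Q'. Q' \<subseteq> U - T \<and> card Q' = m - t}"
  proof (rule bij_betw_byWitness[where f'="\<lambda>Q'. Q' \<union> T"])
    show "\<forall>Q\<in>{Q. Q \<subseteq> U \<and> card Q = m \<and> T \<subseteq> Q}. Q - T \<union> T = Q" by auto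
    show "\<forall>Q'\<in>{Q'. Q' \<subseteq> U - T \<and> card Q' = m - t}. Q' \<union> T - T = Q'" by auto
    show "(\<lambda>Q. Q - T) ` {Q. Q \<subseteq> U \<and> card Q = m \<and> T \<subseteq> Q} \<subseteq> {Q'. Q' \<subseteq> U - T \<and> card Q' = m - t}"
    proof (rule image_subsetI)
      fix Q assume "Q \<in> {Q. Q \<subseteq> U \<and> card Q = m \<and> T \<subseteq> Q}"
      then have Q: "Q \<subseteq> U" "T \<subseteq> Q" "card Q = m" by auto
      then show "Q - T \<in> {Q'. Q' \<subseteq> U - T \<and> card Q' = m - t}"
        using finT T by (auto simp: card_Diff_subset)
    qed
    show "(\<lambda>Q'. Q' \<union> T) ` {Q'. Q' \<subseteq> U - T \<and> card Q' = m - t} \<subseteq> {Q. Q \<subseteq> U \<and> card Q = m \<and> T \<subseteq> Q}"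
    proof (rule image_subsetI)
      fix Q' assume "Q' \<in> {Q'. Q' \<subseteq> U - T \<and> card Q' = m - t}"
      then have Q': "Q' \<subseteq> U - T" "card Q' = m - t" by auto
      have "finite Q'" using Q' fin finite_subset by blast
      then have "card (Q' \<union> T) = card Q' + card T"
        using Q' finT by (intro card_Un_disjoint) auto
      then show "Q' \<union> T \<in> {Q. Q \<subseteq> U \<and> card Q = m \<and> T \<subseteq> Q}"
        using Q' T tm by auto
    qed
  qed
  then have "card {Q. Q \<subseteq> U \<and> card Q = m \<and> T \<subseteq> Q} = card {Q'. Q' \<subseteq> U - T \<and> card Q' = m - t}"
    by (rule bij_betw_same_card)
  also have "\<dots> = card (U - T) choose (m - t)" by (rule n_subsets) (use fin in auto)
  also have "card (U - T) = card U - t" using T finT by (simp add: card_Diff_subset)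
  finally show ?thesis .
qed

lemma sum_binomial_card_Int:
  assumes fin: "finite U" and MU: "M \<subseteq> U" and tm: "t \<le> m"
  shows "(\<Sum>Q\<in>{Q. Q \<subseteq> U \<and> card Q = m}. card (Q \<inter> M) choose t)
         = (card M choose t) * ((card U - t) choose (m - t))"
proof -
  define QS where "QS = {Q. Q \<subseteq> U \<and> card Q = m}"
  define TS where "TS = {T. T \<subseteq> M \<and> card T = t}"
  have finQS: "finite QS" unfolding QS_def using fin by auto
  have finM: "finite M" using MU fin finite_subset by auto
  have finTS: "finite TS" unfolding TS_def using finM by auto
  have "(\<Sum>Q\<in>QS. card (Q \<inter> M) choose t) = (\<Sum>Q\<in>QS. \<Sum>T\<in>{T\<in>TS. T \<subseteq> Q}. 1)"
  proof (rule sum.cong)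
    fix Q assume "Q \<in> QS"
    have "card (Q \<inter> M) choose t = card {T. T \<subseteq> Q \<inter> M \<and> card T = t}"
      by (rule n_subsets[symmetric]) (use finM in auto)
    also have "{T. T \<subseteq> Q \<inter> M \<and> card T = t} = {T\<in>TS. T \<subseteq> Q}" unfolding TS_def by auto
    finally show "card (Q \<inter> M) choose t = (\<Sum>T\<in>{T\<in>TS. T \<subseteq> Q}. 1)" by simp
  qed simp
  also have "\<dots> = (\<Sum>T\<in>TS. \<Sum>Q\<in>{Q\<in>QS. T \<subseteq> Q}. 1)"
    by (rule sum.swap_restrict[OF finQS finTS])
  also have "\<dots> = (\<Sum>T\<in>TS. (card U - t) choose (m - t))"
  proof (rule sum.cong)
    fix T assume T: "T \<in> TS"
    have "{Q\<in>QS. T \<subseteq> Q} = {Q. Q \<subseteq> U \<and> card Q = m \<and> T \<subseteq> Q}" unfolding QS_def by auto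
    then show "(\<Sum>Q\<in>{Q\<in>QS. T \<subseteq> Q}. 1) = (card U - t) choose (m - t)"
      using card_subsets_containing[OF fin _ _ tm, of T] T MU unfolding TS_def by auto
  qed simp
  also have "\<dots> = card TS * ((card U - t) choose (m - t))" by simp
  also have "card TS = card M choose t" unfolding TS_def by (rule n_subsets[OF finM])
  finally show ?thesis unfolding QS_def .
qed

lemma hypergeometric_ratio_step:
  fixes u m x0 D t :: real
  assumes "0 \<le> t" "t + 1 \<le> m" "t \<le> u" "u \<le> 2*m" "u + D \<le> 2*x0" "2*(t+1) \<le> D"
  shows "(u-t)*(m-t)*(4*m+D) \<le> (x0-t)*(2*m-t)*(4*m)"
proof -
  have a: "(u-t)*(4*m+D) \<le> 8*m*(x0-t)"
  proof -
    have "t \<le> D/2" using assms(6) by (simp add: field_simps)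
    then have "2*(x0-t) \<ge> (u-t) + D/2" using assms(5) by (simp add: field_simps)
    then have "4*m*(2*(x0-t)) \<ge> 4*m*((u-t) + D/2)" using assms by (intro mult_left_mono) auto
    moreover have "(u-t)*D \<le> 2*m*D" using assms by (intro mult_right_mono) auto
    ultimately show ?thesis by (simp add: algebra_simps)
  qed
  have b: "2*(m-t) \<le> 2*m - t" using assms by auto
  have "(u-t)*(m-t)*(4*m+D) = ((u-t)*(4*m+D))*(m-t)" by (simp add: algebra_simps)
  also have "\<dots> \<le> (8*m*(x0-t))*(m-t)" using a assms by (intro mult_right_mono) auto
  also have "\<dots> = (4*m*(x0-t))*(2*(m-t))" by (simp add: algebra_simps)
  also have "\<dots> \<le> (4*m*(x0-t))*(2*m-t)" using b assms by (intro mult_left_mono) auto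
  finally show ?thesis by (simp add: algebra_simps)
qed

lemma hypergeometric_ratio_bound:
  fixes u m x0 D :: nat
  assumes "u \<le> 2*m" "u + D \<le> 2*x0"
  shows "2*t \<le> D \<Longrightarrow> t \<le> m \<Longrightarrow>
    real (u choose t) * real ((2*m - t) choose (m - t)) * (4*real m+real D)^t
      \<le> real (x0 choose t) * real ((2*m) choose m) * (4*real m)^t"
proof (induction t)
  case 0
  then show ?case by simp
next
  case (Suc t)
  have IH: "real (u choose t) * real ((2*m - t) choose (m - t)) * (4*real m+real D)^t
      \<le> real (x0 choose t) * real ((2*m) choose m) * (4*real m)^t" using Suc by auto
  have tx0: "t < x0" using Suc.prems assms by presburger
  have e1: "real (u choose Suc t) * real (Suc t) = real (u choose t) * real (u - t)"
    using binomial_Suc_mult[of u t] by (metis of_nat_mult)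
  have e3: "real (x0 choose Suc t) * real (Suc t) = real (x0 choose t) * (real x0 - real t)"
    using binomial_Suc_mult[of x0 t] tx0 by (metis of_nat_diff less_imp_le of_nat_mult)
  have e2: "real ((2*m - Suc t) choose (m - Suc t)) * (2*real m - real t) = real ((2*m - t) choose (m - t)) * (real m - real t)"
  proof -
    have "Suc (m - Suc t) * ((2*m - t) choose Suc (m - Suc t)) = (2*m - t) * ((2*m - t) - 1 choose (m - Suc t))"
      by (rule binomial_absorption)
    moreover have "Suc (m - Suc t) = m - t" using Suc.prems by auto
    moreover have "(2*m - t) - 1 = 2*m - Suc t" by auto
    ultimately have "(m - t) * ((2*m - t) choose (m - t)) = (2*m - t) * ((2*m - Suc t) choose (m - Suc t))" by simp
    then have "real (m - t) * real ((2*m - t) choose (m - t)) = real (2*m - t) * real ((2*m - Suc t) choose (m - Suc t))"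
      by (metis of_nat_mult)
    moreover have "real (m - t) = real m - real t" "real (2*m - t) = 2*real m - real t" using Suc.prems by auto
    ultimately show ?thesis by (simp add: algebra_simps)
  qed
  define A where "A = real (u choose t)"
  define Bb where "Bb = real ((2*m - t) choose (m - t))"
  define Cc where "Cc = real (x0 choose t)"
  define C0 where "C0 = real ((2*m) choose m)"
  have pos1: "real (Suc t) * (2*real m - real t) > 0" using Suc.prems by auto
  have key: "real (u - t) * (real m - real t) * (4*real m+real D) \<le> (real x0 - real t) * (2*real m - real t) * (4*real m)"
  proof (cases "t \<le> u")
    case True
    then have "real (u - t) = real u - real t" by simp
    then show ?thesis using hypergeometric_ratio_step[of "real t" "real m" "real u" "real D" "real x0"] Suc.prems assms True
      by simp
  next
    case False
    then have "u - t = 0" by simp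
    then show ?thesis using Suc.prems tx0 by simp
  qed
  define P where "P = 4*real m+real D"
  define Q where "Q = 4*real m"
  define Bn where "Bn = real ((2*m - Suc t) choose (m - Suc t))"
  have "(real (u choose Suc t) * Bn * P^Suc t) * (real (Suc t) * (2*real m - real t))
      = (real (u choose Suc t) * real (Suc t)) * (Bn * (2*real m - real t)) * P^t * P"
    by (simp add: power_Suc mult_ac)
  also have "\<dots> = (A * real (u - t)) * (Bb * (real m - real t)) * P^t * P"
    using e1 e2 unfolding A_def Bb_def Bn_def by simp
  also have "\<dots> = (A * Bb * P^t) * (real (u - t) * (real m - real t) * P)"
    by (simp add: mult_ac)
  also have "\<dots> \<le> (Cc * C0 * Q^t) * ((real x0 - real t) * (2*real m - real t) * Q)"
  proof (rule mult_mono)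
    show "A * Bb * P^t \<le> Cc * C0 * Q^t" using IH unfolding A_def Bb_def Cc_def C0_def P_def Q_def by simp
    show "real (u - t) * (real m - real t) * P \<le> (real x0 - real t) * (2*real m - real t) * Q"
      using key unfolding P_def Q_def .
    show "0 \<le> real (u - t) * (real m - real t) * P"
      using Suc.prems unfolding P_def by (intro mult_nonneg_nonneg) auto
  qed (use Suc.prems tx0 in \<open>auto simp: Cc_def C0_def Q_def\<close>)
  also have "\<dots> = (Cc * (real x0 - real t)) * C0 * Q^t * Q * (2*real m - real t)"
    by (simp add: mult_ac)
  also have "\<dots> = (real (x0 choose Suc t) * real (Suc t)) * C0 * Q^t * Q * (2*real m - real t)"
    using e3 unfolding Cc_def by simp
  also have "\<dots> = (real (x0 choose Suc t) * C0 * Q^Suc t) * (real (Suc t) * (2*real m - real t))"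
    by (simp add: power_Suc mult_ac)
  finally have "(real (u choose Suc t) * Bn * P^Suc t) * (real (Suc t) * (2*real m - real t))
     \<le> (real (x0 choose Suc t) * C0 * Q^Suc t) * (real (Suc t) * (2*real m - real t))" .
  then show ?case using pos1 unfolding Bn_def C0_def P_def Q_def by (simp only: mult_le_cancel_right_pos)
qed
text \<open>Double counting the pairs (Q, X) with X \<subseteq> Q \<inter> M and |X| = t bounds the number of
  m-subsets Q meeting M in at least x0 points.\<close>
lemma card_subsets_large_Int:
  fixes U M :: "'a set" and m x0 D t :: nat
  assumes fin: "finite U" and cU: "card U = 2*m" and MU: "M \<subseteq> U"
    and x0: "card M + D \<le> 2*x0" and tD: "2*t \<le> D" and tm: "t \<le> m" and m0: "0 < m"
  shows "real (card {Q. Q \<subseteq> U \<and> card Q = m \<and> x0 \<le> card (Q \<inter> M)})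
          \<le> real ((2*m) choose m) * (4*real m / (4*real m + real D))^t"
proof -
  define QS where "QS = {Q. Q \<subseteq> U \<and> card Q = m}"
  define bad where "bad = {Q. Q \<subseteq> U \<and> card Q = m \<and> x0 \<le> card (Q \<inter> M)}"
  have finQS: "finite QS" unfolding QS_def using fin by auto
  have badQS: "bad \<subseteq> QS" unfolding bad_def QS_def by auto
  have uM: "card M \<le> 2*m" using card_mono[OF fin MU] cU by simp
  have "card bad * (x0 choose t) = (\<Sum>Q\<in>bad. x0 choose t)" by simp
  also have "\<dots> \<le> (\<Sum>Q\<in>bad. card (Q \<inter> M) choose t)"
    by (rule sum_mono) (auto simp: bad_def intro: binomial_right_mono)
  also have "\<dots> \<le> (\<Sum>Q\<in>QS. card (Q \<inter> M) choose t)"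
    by (rule sum_mono2[OF finQS badQS]) simp
  also have "\<dots> = (card M choose t) * ((2*m - t) choose (m - t))"
    unfolding QS_def using sum_binomial_card_Int[OF fin MU tm] cU by simp
  finally have c1: "real (card bad) * real (x0 choose t) \<le> real (card M choose t) * real ((2*m - t) choose (m - t))"
    by (metis of_nat_le_iff of_nat_mult)
  have c2: "real (card M choose t) * real ((2*m - t) choose (m - t)) * (4*real m+real D)^t
      \<le> real (x0 choose t) * real ((2*m) choose m) * (4*real m)^t"
    by (rule hypergeometric_ratio_bound[OF uM x0 tD tm])
  have tx0: "t \<le> x0" using x0 tD by linarith
  have Cpos: "real (x0 choose t) > 0" using tx0 by simp
  have Ppos: "(4*real m+real D)^t > 0" using m0 by simp
  have "real (card bad) * real (x0 choose t) * (4*real m+real D)^t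
      \<le> real (x0 choose t) * real ((2*m) choose m) * (4*real m)^t"
    using c1 c2 Ppos by (meson dual_order.trans less_imp_le mult_right_mono)
  then have "real (card bad) * (4*real m+real D)^t \<le> real ((2*m) choose m) * (4*real m)^t"
    using Cpos by (simp add: mult_ac)
  then have "real (card bad) \<le> real ((2*m) choose m) * (4*real m)^t / (4*real m+real D)^t"
    using Ppos by (simp add: field_simps)
  then show ?thesis unfolding bad_def by (simp add: power_divide)
qed

lemma card_Int_le_by_fibres:
  assumes fin: "finite \<Omega>"
    and fib: "\<And>\<omega>. \<omega> \<in> \<Omega> \<Longrightarrow> real (card (E \<inter> {\<omega>'\<in>\<Omega>. g \<omega>' = g \<omega>})) \<le> p * real (card {\<omega>'\<in>\<Omega>. g \<omega>' = g \<omega>})"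
  shows "real (card (E \<inter> \<Omega>)) \<le> p * real (card \<Omega>)"
proof -
  have c1: "card (E \<inter> \<Omega>) = (\<Sum>y\<in>g ` \<Omega>. card (E \<inter> {\<omega>'\<in>\<Omega>. g \<omega>' = y}))"
  proof -
    have "card (E \<inter> \<Omega>) = (\<Sum>\<omega>\<in>\<Omega>. if \<omega> \<in> E then 1 else 0)"
      using fin by (simp add: sum.If_cases Int_commute)
    also have "\<dots> = (\<Sum>y\<in>g ` \<Omega>. \<Sum>\<omega>\<in>{\<omega>'\<in>\<Omega>. g \<omega>' = y}. if \<omega> \<in> E then 1 else 0)"
      by (rule sum.image_gen[OF fin])
    also have "\<dots> = (\<Sum>y\<in>g ` \<Omega>. card (E \<inter> {\<omega>'\<in>\<Omega>. g \<omega>' = y}))"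
    proof (rule sum.cong)
      fix y
      have "finite {\<omega>'\<in>\<Omega>. g \<omega>' = y}" using fin by auto
      then show "(\<Sum>\<omega>\<in>{\<omega>'\<in>\<Omega>. g \<omega>' = y}. if \<omega> \<in> E then 1 else 0) = card (E \<inter> {\<omega>'\<in>\<Omega>. g \<omega>' = y})"
        by (simp add: sum.If_cases Int_commute)
    qed simp
    finally show ?thesis .
  qed
  have c2: "card \<Omega> = (\<Sum>y\<in>g ` \<Omega>. card {\<omega>'\<in>\<Omega>. g \<omega>' = y})"
  proof -
    have "card \<Omega> = (\<Sum>\<omega>\<in>\<Omega>. 1)" by simp
    also have "\<dots> = (\<Sum>y\<in>g ` \<Omega>. \<Sum>\<omega>\<in>{\<omega>'\<in>\<Omega>. g \<omega>' = y}. 1)"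
      by (rule sum.image_gen[OF fin])
    finally show ?thesis by simp
  qed
  have "real (card (E \<inter> \<Omega>)) = (\<Sum>y\<in>g ` \<Omega>. real (card (E \<inter> {\<omega>'\<in>\<Omega>. g \<omega>' = y})))"
    using c1 by simp
  also have "\<dots> \<le> (\<Sum>y\<in>g ` \<Omega>. p * real (card {\<omega>'\<in>\<Omega>. g \<omega>' = y}))"
  proof (rule sum_mono)
    fix y assume "y \<in> g ` \<Omega>"
    then obtain \<omega> where "\<omega> \<in> \<Omega>" "y = g \<omega>" by auto
    then show "real (card (E \<inter> {\<omega>'\<in>\<Omega>. g \<omega>' = y})) \<le> p * real (card {\<omega>'\<in>\<Omega>. g \<omega>' = y})"
      using fib by simp
  qed
  also have "\<dots> = p * real (card \<Omega>)" using c2 by (simp add: sum_distrib_left)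
  finally show ?thesis .
qed

lemma configs_iff:
  "(S,B,v) \<in> configs n r m a \<longleftrightarrow> S \<in> block_partitions n r m \<and>
     (\<forall>i j l. B i j l \<longrightarrow> i\<in>{1..r} \<and> j < m - a i \<and> l \<in> S i) \<and>
     (\<forall>i j. v i j \<longrightarrow> i\<in>{1..r} \<and> j < m - a i)"
  by (simp add: configs_def cS_def cB_def cv_def)

lemma finite_block_partitions: "finite (block_partitions n r m)"
proof -
  have inj: "inj_on (\<lambda>S. restrict S {1..r}) (block_partitions n r m)"
  proof (rule inj_onI)
    fix S S' assume S: "S \<in> block_partitions n r m" and S': "S' \<in> block_partitions n r m"
      and eq: "restrict S {1..r} = restrict S' {1..r}"
    show "S = S'"
    proof
      fix i show "S i = S' i"
      proof (cases "i \<in> {1..r}")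
        case True then show ?thesis using fun_cong[OF eq, of i] by simp
      next
        case False then show ?thesis using S S' unfolding block_partitions_def by auto
      qed
    qed
  qed
  have "(\<lambda>S. restrict S {1..r}) ` block_partitions n r m \<subseteq> PiE {1..r} (\<lambda>_. Pow {1..n})"
    unfolding block_partitions_def by auto
  then have "finite ((\<lambda>S. restrict S {1..r}) ` block_partitions n r m)"
    by (rule finite_subset) (auto intro!: finite_PiE)
  then show ?thesis using finite_imageD inj by blast
qed

lemma finite_bool_fun3_supported:
  assumes "finite D"
  shows "finite {B :: nat \<Rightarrow> nat \<Rightarrow> nat \<Rightarrow> bool. \<forall>i j l. B i j l \<longrightarrow> (i,j,l) \<in> D}"
proof -
  let ?A = "{B :: nat \<Rightarrow> nat \<Rightarrow> nat \<Rightarrow> bool. \<forall>i j l. B i j l \<longrightarrow> (i,j,l) \<in> D}"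
  have inj: "inj_on (\<lambda>B. {(i,j,l). B i j l}) ?A"
    by (rule inj_onI) (auto simp: fun_eq_iff set_eq_iff)
  have "(\<lambda>B. {(i,j,l). B i j l}) ` ?A \<subseteq> Pow D" by auto
  then have "finite ((\<lambda>B. {(i,j,l). B i j l}) ` ?A)" using assms finite_subset by blast
  then show ?thesis using finite_imageD inj by blast
qed

lemma finite_bool_fun2_supported:
  assumes "finite D"
  shows "finite {v :: nat \<Rightarrow> nat \<Rightarrow> bool. \<forall>i j. v i j \<longrightarrow> (i,j) \<in> D}"
proof -
  let ?A = "{v :: nat \<Rightarrow> nat \<Rightarrow> bool. \<forall>i j. v i j \<longrightarrow> (i,j) \<in> D}"
  have inj: "inj_on (\<lambda>v. {(i,j). v i j}) ?A"
    by (rule inj_onI) (auto simp: fun_eq_iff set_eq_iff)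
  have "(\<lambda>v. {(i,j). v i j}) ` ?A \<subseteq> Pow D" by auto
  then have "finite ((\<lambda>v. {(i,j). v i j}) ` ?A)" using assms finite_subset by blast
  then show ?thesis using finite_imageD inj by blast
qed

lemma finite_configs: "finite (configs n r m a)"
proof -
  have "configs n r m a \<subseteq> block_partitions n r m \<times>
     {B. \<forall>i j l. B i j l \<longrightarrow> (i,j,l) \<in> {1..r} \<times> {..<m} \<times> {1..n}} \<times>
     {v. \<forall>i j. v i j \<longrightarrow> (i,j) \<in> {1..r} \<times> {..<m}}"
  proof (rule subsetI)
    fix \<omega> assume c0: "\<omega> \<in> configs n r m a"
    obtain S B v where om: "\<omega> = (S,B,v)" by (cases \<omega>) auto
    have c: "(S,B,v) \<in> configs n r m a" using c0 om by simp
    then have S: "S \<in> block_partitions n r m" by (simp add: configs_iff)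
    have "\<forall>i j l. B i j l \<longrightarrow> (i,j,l) \<in> {1..r} \<times> {..<m} \<times> {1..n}"
      using c S unfolding configs_iff block_partitions_def by fastforce
    moreover have "\<forall>i j. v i j \<longrightarrow> (i,j) \<in> {1..r} \<times> {..<m}"
      using c unfolding configs_iff by fastforce
    ultimately show "\<omega> \<in> block_partitions n r m \<times>
     {B. \<forall>i j l. B i j l \<longrightarrow> (i,j,l) \<in> {1..r} \<times> {..<m} \<times> {1..n}} \<times>
     {v. \<forall>i j. v i j \<longrightarrow> (i,j) \<in> {1..r} \<times> {..<m}}" using S om by simp
  qed
  moreover have "finite (block_partitions n r m \<times>
     {B. \<forall>i j l. B i j l \<longrightarrow> (i,j,l) \<in> {1..r} \<times> {..<m} \<times> {1..n}} \<times>
     {v. \<forall>i j. v i j \<longrightarrow> (i,j) \<in> {1..r} \<times> {..<m}})"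
    by (intro finite_cartesian_product finite_block_partitions finite_bool_fun3_supported finite_bool_fun2_supported) auto
  ultimately show ?thesis by (rule finite_subset)
qed

section \<open>Block partitions and the product formula\<close>

lemma block_partitionsD:
  assumes "S \<in> block_partitions n r m"
  shows "\<And>i. i \<in> {1..r} \<Longrightarrow> S i \<subseteq> {1..n}" "\<And>i. i \<in> {1..r} \<Longrightarrow> card (S i) = m"
    "\<And>i j. i \<in> {1..r} \<Longrightarrow> j \<in> {1..r} \<Longrightarrow> i \<noteq> j \<Longrightarrow> S i \<inter> S j = {}"
    "(\<Union>i\<in>{1..r}. S i) = {1..n}" "\<And>i. i \<notin> {1..r} \<Longrightarrow> S i = {}"
  using assms unfolding block_partitions_def by auto

lemma block_partitionsI:
  assumes "\<And>i. i \<in> {1..r} \<Longrightarrow> S i \<subseteq> {1..n}" "\<And>i. i \<in> {1..r} \<Longrightarrow> card (S i) = m"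
    "\<And>i j. i \<in> {1..r} \<Longrightarrow> j \<in> {1..r} \<Longrightarrow> i \<noteq> j \<Longrightarrow> S i \<inter> S j = {}"
    "(\<Union>i\<in>{1..r}. S i) = {1..n}" "\<And>i. i \<notin> {1..r} \<Longrightarrow> S i = {}"
  shows "S \<in> block_partitions n r m"
  using assms unfolding block_partitions_def by auto

lemma card_Un_blocks:
  assumes S: "S \<in> block_partitions n r m" and k: "k \<in> {1..r}" and i: "i \<in> {1..r}" and ki: "k \<noteq> i"
  shows "card (S k \<union> S i) = 2*m"
proof -
  have f: "finite (S k)" "finite (S i)" using block_partitionsD(1)[OF S k] block_partitionsD(1)[OF S i] finite_subset by auto
  have "card (S k \<union> S i) = card (S k) + card (S i)"
    by (rule card_Un_disjoint) (use f block_partitionsD(3)[OF S k i ki] in auto)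
  then show ?thesis using block_partitionsD(2)[OF S k] block_partitionsD(2)[OF S i] by simp
qed

lemma block_partitions_exchange:
  assumes S: "S \<in> block_partitions n r m" and k: "k \<in> {1..r}" and i: "i \<in> {1..r}" and ki: "k \<noteq> i"
    and Q: "Q \<subseteq> S k \<union> S i" "card Q = m"
  shows "S(k := (S k \<union> S i) - Q, i := Q) \<in> block_partitions n r m"
proof -
  define U where "U = S k \<union> S i"
  define S' where "S' = S(k := U - Q, i := Q)"
  have U: "U \<subseteq> {1..n}" unfolding U_def using block_partitionsD(1)[OF S k] block_partitionsD(1)[OF S i] by auto
  have cU: "card U = 2*m" unfolding U_def by (rule card_Un_blocks[OF S k i ki])
  have finU: "finite U" using U finite_subset by auto
  have S'k: "S' k = U - Q" and S'i: "S' i = Q" and S'j: "\<And>j. j \<noteq> k \<Longrightarrow> j \<noteq> i \<Longrightarrow> S' j = S j"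
    unfolding S'_def using ki by auto
  have disjU: "\<And>j. j \<in> {1..r} \<Longrightarrow> j \<noteq> k \<Longrightarrow> j \<noteq> i \<Longrightarrow> S j \<inter> U = {}"
    unfolding U_def using block_partitionsD(3)[OF S] k i by blast
  have "S' \<in> block_partitions n r m"
  proof (rule block_partitionsI)
    fix j assume j: "j \<in> {1..r}"
    show "S' j \<subseteq> {1..n}" using S'k S'i S'j[of j] U Q block_partitionsD(1)[OF S j] unfolding U_def by (cases "j = k"; cases "j = i") auto
    show "card (S' j) = m"
    proof (cases "j = k")
      case True
      have "card (U - Q) = card U - card Q" using Q finU unfolding U_def by (simp add: card_Diff_subset finite_subset)
      then show ?thesis using True S'k cU Q by simp
    next
      case False
      then show ?thesis using S'i S'j[of j] Q block_partitionsD(2)[OF S j] by (cases "j = i") auto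
    qed
  next
    fix j j' assume j: "j \<in> {1..r}" and j': "j' \<in> {1..r}" and jj: "j \<noteq> j'"
    show "S' j \<inter> S' j' = {}"
    proof (cases "j \<in> {k,i}")
      case True
      show ?thesis
      proof (cases "j' \<in> {k,i}")
        case True
        then show ?thesis using \<open>j \<in> {k,i}\<close> jj S'k S'i by auto
      next
        case False
        then have "S' j' = S j'" "S j' \<inter> U = {}" using S'j disjU j' by auto
        moreover have "S' j \<subseteq> U" using \<open>j \<in> {k,i}\<close> S'k S'i Q unfolding U_def by auto
        ultimately show ?thesis by auto
      qed
    next
      case False
      show ?thesis
      proof (cases "j' \<in> {k,i}")
        case True
        then have "S' j' \<subseteq> U" using S'k S'i Q unfolding U_def by auto
        moreover have "S' j = S j" "S j \<inter> U = {}" using S'j disjU j False by auto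
        ultimately show ?thesis by auto
      next
        case False
        then show ?thesis using \<open>j \<notin> {k,i}\<close> S'j block_partitionsD(3)[OF S j j' jj] by auto
      qed
    qed
  next
    show "(\<Union>j\<in>{1..r}. S' j) = {1..n}"
    proof
      show "(\<Union>j\<in>{1..r}. S' j) \<subseteq> {1..n}"
      proof
        fix x assume "x \<in> (\<Union>j\<in>{1..r}. S' j)"
        then obtain j where j: "j \<in> {1..r}" "x \<in> S' j" by auto
        have "S' j \<subseteq> U \<or> S' j = S j" using S'k S'i S'j[of j] Q unfolding U_def by (cases "j=k"; cases "j=i") auto
        then show "x \<in> {1..n}" using U block_partitionsD(1)[OF S j(1)] j(2) by blast
      qed
      show "{1..n} \<subseteq> (\<Union>j\<in>{1..r}. S' j)"
      proof
        fix x assume "x \<in> {1..n}"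
        then have "x \<in> (\<Union>j\<in>{1..r}. S j)" using block_partitionsD(4)[OF S] by simp
    then obtain j where j: "j \<in> {1..r}" "x \<in> S j" by blast
        show "x \<in> (\<Union>j\<in>{1..r}. S' j)"
        proof (cases "j \<in> {k,i}")
          case True
          then have "x \<in> U" using j unfolding U_def by auto
          then have "x \<in> S' k \<or> x \<in> S' i" using S'k S'i by auto
          then show ?thesis using k i by auto
        next
          case False
          then have "x \<in> S' j" using j S'j[of j] by auto
          then show ?thesis using j(1) by blast
        qed
      qed
    qed
  next
    fix j assume "j \<notin> {1..r}"
    then show "S' j = {}" using S'j block_partitionsD(5)[OF S] k i by auto
  qed
  then show ?thesis unfolding S'_def U_def .
qed

lemma block_partitions_agree_outside:
  assumes S: "S \<in> block_partitions n r m" and S': "S' \<in> block_partitions n r m"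
    and k: "k \<in> {1..r}" and i: "i \<in> {1..r}" and ki: "k \<noteq> i"
    and agree: "\<And>j. j \<noteq> k \<Longrightarrow> j \<noteq> i \<Longrightarrow> S' j = S j"
  shows "S' i \<subseteq> S k \<union> S i" "S' k = (S k \<union> S i) - S' i"
proof -
  define U where "U = S k \<union> S i"
  have inU: "x \<in> U" if x: "x \<in> S' j" and jki: "j = k \<or> j = i" for x j
  proof -
    have j: "j \<in> {1..r}" using jki k i by auto
    have "x \<in> {1..n}" using block_partitionsD(1)[OF S' j] x by auto
    then have "x \<in> (\<Union>j\<in>{1..r}. S j)" using block_partitionsD(4)[OF S] by simp
    then obtain j' where j': "j' \<in> {1..r}" "x \<in> S j'" by blast
    show "x \<in> U"
    proof (cases "j' = k \<or> j' = i")
      case True then show ?thesis using j' unfolding U_def by auto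
    next
      case False
      then have "x \<in> S' j'" using agree j'(2) by auto
      moreover have "S' j' \<inter> S' j = {}" using block_partitionsD(3)[OF S' j'(1) j] False jki by auto
      ultimately show ?thesis using x by auto
    qed
  qed
  show "S' i \<subseteq> S k \<union> S i" using inU unfolding U_def by blast
  show "S' k = (S k \<union> S i) - S' i"
  proof
    show "S' k \<subseteq> S k \<union> S i - S' i"
      using inU block_partitionsD(3)[OF S' k i ki] unfolding U_def by blast
    show "S k \<union> S i - S' i \<subseteq> S' k"
    proof
      fix x assume x: "x \<in> S k \<union> S i - S' i"
      have "x \<in> {1..n}" using x block_partitionsD(1)[OF S k] block_partitionsD(1)[OF S i] by auto
      then have "x \<in> (\<Union>j\<in>{1..r}. S' j)" using block_partitionsD(4)[OF S'] by simp
    then obtain j where j: "j \<in> {1..r}" "x \<in> S' j" by blast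
      show "x \<in> S' k"
      proof (cases "j = k")
        case True then show ?thesis using j by simp
      next
        case False
        have "j \<noteq> i" using j x by auto
        then have "x \<in> S j" using agree False j by auto
        moreover have "S j \<inter> S k = {}" "S j \<inter> S i = {}" using block_partitionsD(3)[OF S] j k i False \<open>j \<noteq> i\<close> by auto
        ultimately show ?thesis using x by auto
      qed
    qed
  qed
qed

lemma glue_blocks:
  assumes Sbp: "S \<in> block_partitions n r m" and z: "\<forall>i\<in>{1..r}. z i \<in> S i \<rightarrow>\<^sub>E (UNIV::bool set)"
  shows "\<exists>x\<in>{1..n} \<rightarrow>\<^sub>E (UNIV::bool set). \<forall>i\<in>{1..r}. restrict x (S i) = z i"
proof -
  define ix where "ix l = (THE i. i \<in> {1..r} \<and> l \<in> S i)" for l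
  have ixI: "ix l = i" if "i \<in> {1..r}" "l \<in> S i" for i l
    unfolding ix_def
  proof (rule the_equality)
    show "i \<in> {1..r} \<and> l \<in> S i" using that by simp
    fix i' assume "i' \<in> {1..r} \<and> l \<in> S i'"
    then show "i' = i" using block_partitionsD(3)[OF Sbp, of i i'] that by auto
  qed
  define x where "x l = (if l \<in> {1..n} then z (ix l) l else undefined)" for l
  have "restrict x (S i) = z i" if i: "i \<in> {1..r}" for i
  proof
    fix l show "restrict x (S i) l = z i l"
    proof (cases "l \<in> S i")
      case True
      then show ?thesis using ixI[OF i True] block_partitionsD(1)[OF Sbp i] unfolding x_def by auto
    next
      case False
      then show ?thesis using z i by (auto simp: PiE_def extensional_def)
    qed
  qed
  moreover have "x \<in> {1..n} \<rightarrow>\<^sub>E (UNIV::bool set)" unfolding x_def by (auto simp: PiE_def extensional_def)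
  ultimately show ?thesis by blast
qed

lemma card_cube_filter_eq_prod_blocks:
  assumes Sbp: "S \<in> block_partitions n r m"
    and local: "\<And>i x. i \<in> {1..r} \<Longrightarrow> P i (restrict x (S i)) = P i x"
  shows "card {x \<in> {1..n} \<rightarrow>\<^sub>E (UNIV::bool set). \<forall>i\<in>{1..r}. P i x}
       = (\<Prod>i\<in>{1..r}. card {z \<in> S i \<rightarrow>\<^sub>E (UNIV::bool set). P i z})"
proof -
  define Xf where "Xf = {x \<in> {1..n} \<rightarrow>\<^sub>E (UNIV::bool set). \<forall>i\<in>{1..r}. P i x}"
  define Xi where "Xi i = {z \<in> S i \<rightarrow>\<^sub>E (UNIV::bool set). P i z}" for i
  define f where "f x = (\<lambda>i\<in>{1..r}. restrict x (S i))" for x :: "nat \<Rightarrow> bool"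
  have inj: "inj_on f Xf"
  proof (rule inj_onI)
    fix x1 x2 assume x1: "x1 \<in> Xf" and x2: "x2 \<in> Xf" and e: "f x1 = f x2"
    show "x1 = x2"
    proof
      fix l
      show "x1 l = x2 l"
      proof (cases "l \<in> {1..n}")
        case True
        then obtain i where i: "i \<in> {1..r}" "l \<in> S i" using block_partitionsD(4)[OF Sbp] by blast
        have "f x1 i l = f x2 i l" using e by simp
        then show ?thesis using i unfolding f_def by simp
      next
        case False
        then show ?thesis using x1 x2 unfolding Xf_def by (auto simp: PiE_def extensional_def)
      qed
    qed
  qed
  have "f ` Xf = PiE {1..r} Xi"
  proof
    show "f ` Xf \<subseteq> PiE {1..r} Xi"
    proof (rule image_subsetI)
      fix x assume "x \<in> Xf"
      then have Px: "\<forall>i\<in>{1..r}. P i x" unfolding Xf_def by simp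
      show "f x \<in> PiE {1..r} Xi"
      proof (rule PiE_I)
        fix i assume i: "i \<in> {1..r}"
        have "P i (restrict x (S i))" using local[OF i] Px i by simp
        then show "f x i \<in> Xi i" unfolding f_def Xi_def using i by simp
      next
        fix i assume "i \<notin> {1..r}"
        then show "f x i = undefined" unfolding f_def by auto
      qed
    qed
    show "PiE {1..r} Xi \<subseteq> f ` Xf"
    proof
      fix z assume z: "z \<in> PiE {1..r} Xi"
      then have "\<forall>i\<in>{1..r}. z i \<in> S i \<rightarrow>\<^sub>E (UNIV::bool set)" unfolding Xi_def by auto
      from glue_blocks[OF Sbp this] obtain x
        where x: "x \<in> {1..n} \<rightarrow>\<^sub>E (UNIV::bool set)" and res: "\<forall>i\<in>{1..r}. restrict x (S i) = z i" ..
      have fx: "f x = z"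
      proof
        fix i show "f x i = z i"
        proof (cases "i \<in> {1..r}")
          case True then show ?thesis using res unfolding f_def by simp
        next
          case False then show ?thesis using PiE_arb[OF z False] unfolding f_def by auto
        qed
      qed
      have Px: "P i x" if i: "i \<in> {1..r}" for i
      proof -
        have "z i \<in> Xi i" using PiE_mem[OF z i] .
        then have "P i (z i)" unfolding Xi_def by simp
        then show ?thesis using local[OF i, of x] res i by simp
      qed
      have "x \<in> Xf" using x Px unfolding Xf_def by simp
      then show "z \<in> f ` Xf" using fx rev_image_eqI[of x Xf z f] by simp
    qed
  qed
  then have "card Xf = card (PiE {1..r} Xi)" using card_image[OF inj] by simp
  also have "\<dots> = (\<Prod>i\<in>{1..r}. card (Xi i))" by (rule card_PiE) simp
  finally show ?thesis unfolding Xf_def Xi_def .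
qed

lemma block_sat_cong:
  assumes "\<forall>l\<in>cS \<omega> i. x l = x' l"
  shows "block_sat m a \<omega> i x = block_sat m a \<omega> i x'"
proof -
  have "\<And>j. {l\<in>cS \<omega> i. cB \<omega> i j l \<and> x l} = {l\<in>cS \<omega> i. cB \<omega> i j l \<and> x' l}" using assms by auto
  then show ?thesis unfolding block_sat_def by simp
qed

lemma muH_eq_prod_muiH:
  assumes om: "\<omega> \<in> configs n r m a" and HS: "HS \<subseteq> {1..n}"
  shows "muH n r m a \<omega> HS y = (\<Prod>i\<in>{1..r}. muiH m a \<omega> i HS y)"
proof -
  define P where "P i x \<longleftrightarrow> (\<forall>l\<in>HS \<inter> cS \<omega> i. x l = y l) \<and> block_sat m a \<omega> i x" for i x
  have Sbp: "cS \<omega> \<in> block_partitions n r m" using om unfolding configs_def by simp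
  have local: "P i (restrict x (cS \<omega> i)) = P i x" for i x
  proof -
    have "block_sat m a \<omega> i (restrict x (cS \<omega> i)) = block_sat m a \<omega> i x"
      by (rule block_sat_cong) simp
    moreover have "(\<forall>l\<in>HS \<inter> cS \<omega> i. restrict x (cS \<omega> i) l = y l) = (\<forall>l\<in>HS \<inter> cS \<omega> i. x l = y l)"
      by simp
    ultimately show ?thesis unfolding P_def by simp
  qed
  have "HS \<subseteq> (\<Union>i\<in>{1..r}. cS \<omega> i)" using HS block_partitionsD(4)[OF Sbp] by simp
  then have cover: "(\<forall>l\<in>HS. x l = y l) \<longleftrightarrow> (\<forall>i\<in>{1..r}. \<forall>l\<in>HS \<inter> cS \<omega> i. x l = y l)" for x
    by blast
  have "muH n r m a \<omega> HS y = real (card {x \<in> {1..n} \<rightarrow>\<^sub>E (UNIV::bool set). \<forall>i\<in>{1..r}. P i x})"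
    unfolding muH_def P_def cover by (simp only: ball_conj_distrib)
  also have "\<dots> = real (\<Prod>i\<in>{1..r}. card {z \<in> cS \<omega> i \<rightarrow>\<^sub>E (UNIV::bool set). P i z})"
    by (simp only: card_cube_filter_eq_prod_blocks[where P=P, OF Sbp local])
  also have "\<dots> = (\<Prod>i\<in>{1..r}. muiH m a \<omega> i HS y)"
    unfolding muiH_def P_def by simp
  finally show ?thesis .
qed

section \<open>The conditioned instance\<close>

definition factorization_event ::
    "nat \<Rightarrow> nat \<Rightarrow> nat \<Rightarrow> (nat \<Rightarrow> nat) \<Rightarrow> nat \<Rightarrow> nat set \<Rightarrow> (nat \<Rightarrow> bool) \<Rightarrow> config set" where
  "factorization_event n r m a k HS y = {\<omega>. muH n r m a \<omega> HS y =
     (\<Prod>i\<in>{1..k}. muiH m a \<omega> i HS y) *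
     2 powr (- real (card HS) + real (card (HS \<inter> (\<Union>i\<in>{1..k}. cS \<omega> i))) + (\<Sum>i\<in>{k<..r}. real (a i)))}"

definition hypergeometric_tail :: "nat \<Rightarrow> nat \<Rightarrow> real" where
  "hypergeometric_tail m D = (4 * real m / (4 * real m + real D)) ^ (D div 2)"

lemma measure_pmf_of_set_ge:
  assumes fin: "finite \<Omega>" and \<omega>: "\<omega> \<in> \<Omega>" and bad: "real (card (\<Omega> - G)) \<le> q * real (card \<Omega>)"
  shows "measure_pmf.prob (pmf_of_set \<Omega>) G \<ge> 1 - q"
proof -
  have ne: "\<Omega> \<noteq> {}" and pos: "real (card \<Omega>) > 0" using fin \<omega> by (auto simp: card_gt_0_iff)
  have "card (\<Omega> \<inter> G) + card (\<Omega> - G) = card \<Omega>"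
    using fin by (metis Int_Diff_Un Int_Diff_disjoint card_Un_disjoint finite_Diff finite_Int)
  then have "measure_pmf.prob (pmf_of_set \<Omega>) G = 1 - real (card (\<Omega> - G)) / real (card \<Omega>)"
    using measure_pmf_of_set[OF ne fin, of G] pos by (simp add: field_simps flip: of_nat_add)
  moreover have "real (card (\<Omega> - G)) / real (card \<Omega>) \<le> q" using bad pos by (simp add: divide_le_eq)
  ultimately show ?thesis by linarith
qed

lemma real_card_le_inverse_two_pow:
  assumes "c * 2 ^ T \<le> d"
  shows "real c \<le> 1 / 2 ^ T * real d"
proof -
  have "real c * 2 ^ T \<le> real d"
    using assms by (metis of_nat_le_iff of_nat_mult of_nat_numeral of_nat_power)
  then show ?thesis by (simp add: field_simps)
qed

text \<open>The blocks S_1, ..., S_{k-1} together with B_i, v_i for i < k are fixed by \<omega>0;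
  T is the slack in the exponent, A = a_1 the growth rate of the a_i.\<close>
locale conditioned_instance =
  fixes n r m :: nat and a :: "nat \<Rightarrow> nat" and k :: nat and \<omega>0 :: config
    and HS :: "nat set" and y :: "nat \<Rightarrow> bool" and T A :: nat
  assumes k1: "1 \<le> k" and kr: "k < r" and om0: "\<omega>0 \<in> configs n r m a" and HS: "HS \<subseteq> {1..n}"
    and am: "\<forall>i\<in>{1..r}. a i < m"
    and a_eq_mult: "\<forall>i\<in>{1..r}. a i = i * A"
    and TA: "2*T \<le> A" and half_gap_le_m: "(A - 2*T) div 2 \<le> m"
begin

abbreviation \<Omega> where "\<Omega> \<equiv> configs_given n r m a k \<omega>0"
definition block_codim where "block_codim \<omega> i = card (HS \<inter> cS \<omega> i)"
definition block_mu where "block_mu \<omega> i = muiH m a \<omega> i HS y"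

definition overconstrained_event where
  "overconstrained_event = {\<omega>. block_mu \<omega> k \<noteq> 0 \<and> a k + T \<le> block_codim \<omega> k}"
definition wrong_mu_event where
  "wrong_mu_event i = {\<omega>. block_mu \<omega> i \<noteq> 2 powr (real (a i) - real (block_codim \<omega> i)) \<and> block_codim \<omega> i + T \<le> a i}"
definition unbalanced_event where
  "unbalanced_event i = {\<omega>. block_codim \<omega> k + A < block_codim \<omega> i + 2*T}"

text \<open>Each bad event is bounded fibrewise: the map forgets exactly the randomness that is
  resampled within a fibre (v_k; the free columns of B_i; how S_k \<union> S_i is split).\<close>
definition v_erased where
  "v_erased \<omega> = (cS \<omega>, cB \<omega>, (cv \<omega>)(k := (\<lambda>_. False)))"
definition free_columns_erased where
  "free_columns_erased i \<omega> = (cS \<omega>, \<lambda>i' j l. if i' = i \<and> j < m - a i \<and> l \<in> cS \<omega> i - HS then False else cB \<omega> i' j l, cv \<omega>)"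
definition blocks_merged where
  "blocks_merged i \<omega> = (cS \<omega>)(k := {}, i := {})"

lemma config_components: "\<omega> = (cS \<omega>, cB \<omega>, cv \<omega>)"
  by (simp add: cS_def cB_def cv_def)

lemma Omega_iff: "(S,B,v) \<in> \<Omega> \<longleftrightarrow> (S,B,v) \<in> configs n r m a \<and>
   (\<forall>i\<in>{1..<k}. S i = cS \<omega>0 i \<and> B i = cB \<omega>0 i \<and> v i = cv \<omega>0 i)"
  by (simp add: configs_given_def cS_def cB_def cv_def)

lemma finite_Omega: "finite \<Omega>"
  by (rule finite_subset[OF _ finite_configs]) (auto simp: configs_given_def)

lemma omega0_in_Omega: "\<omega>0 \<in> \<Omega>"
  using om0 by (simp add: configs_given_def)

lemma Omega_configs: "\<omega> \<in> \<Omega> \<Longrightarrow> \<omega> \<in> configs n r m a"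
  by (simp add: configs_given_def)

lemma Omega_block:
  assumes "\<omega> \<in> \<Omega>" "i \<in> {1..r}"
  shows "cS \<omega> i \<subseteq> {1..n}" "card (cS \<omega> i) = m" "finite (cS \<omega> i)"
proof -
  have "cS \<omega> \<in> block_partitions n r m" using assms(1) by (simp add: configs_given_def configs_def)
  then show "cS \<omega> i \<subseteq> {1..n}" "card (cS \<omega> i) = m" using assms(2) unfolding block_partitions_def by auto
  then show "finite (cS \<omega> i)" using finite_subset by blast
qed

lemma block_mu_nonzero_witness:
  assumes "block_mu \<omega> i \<noteq> 0"
  shows "\<exists>x. x \<in> cS \<omega> i \<rightarrow>\<^sub>E (UNIV::bool set) \<and> (\<forall>l\<in>HS \<inter> cS \<omega> i. x l = y l) \<and> block_sat m a \<omega> i x"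
proof (rule ccontr)
  assume "\<not> ?thesis"
  then have e: "{x \<in> cS \<omega> i \<rightarrow>\<^sub>E (UNIV::bool set). (\<forall>l\<in>HS \<inter> cS \<omega> i. x l = y l) \<and> block_sat m a \<omega> i x} = {}"
    by auto
  have "block_mu \<omega> i = 0" unfolding block_mu_def muiH_def e by simp
  then show False using assms by simp
qed

lemma card_block_free:
  assumes "\<omega> \<in> \<Omega>" "i \<in> {1..r}"
  shows "card (cS \<omega> i - HS) = m - block_codim \<omega> i" "block_codim \<omega> i \<le> m"
proof -
  have f: "finite (cS \<omega> i)" using Omega_block[OF assms] by simp
  have "card (cS \<omega> i - HS) = card (cS \<omega> i) - card (cS \<omega> i \<inter> HS)"
    by (rule card_Diff_subset_Int) (use f in auto)
  then show "card (cS \<omega> i - HS) = m - block_codim \<omega> i"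
    using Omega_block[OF assms] by (simp add: block_codim_def Int_commute)
  show "block_codim \<omega> i \<le> m" unfolding block_codim_def using card_mono[OF f, of "HS \<inter> cS \<omega> i"] Omega_block[OF assms] by auto
qed

lemma v_erased_eqD:
  assumes "v_erased \<omega>' = v_erased \<omega>"
  shows "cS \<omega>' = cS \<omega>" "cB \<omega>' = cB \<omega>" "\<And>i. i \<noteq> k \<Longrightarrow> cv \<omega>' i = cv \<omega> i"
proof -
  have e: "cS \<omega>' = cS \<omega> \<and> cB \<omega>' = cB \<omega> \<and> (cv \<omega>')(k := (\<lambda>_. False)) = (cv \<omega>)(k := (\<lambda>_. False))"
    using assms unfolding v_erased_def by simp
  then show "cS \<omega>' = cS \<omega>" "cB \<omega>' = cB \<omega>" by simp_all
  show "cv \<omega>' i = cv \<omega> i" if "i \<noteq> k" for i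
    using fun_cong[OF conjunct2[OF conjunct2[OF e]], of i] that by simp
qed

lemma inj_on_v_erased_fibre:
  "inj_on (\<lambda>\<omega>'. {j. cv \<omega>' k j}) {\<omega>'\<in>\<Omega>. v_erased \<omega>' = v_erased \<omega>}"
proof (rule inj_onI)
  fix \<omega>1 \<omega>2 assume "\<omega>1 \<in> {\<omega>'\<in>\<Omega>. v_erased \<omega>' = v_erased \<omega>}"
    and "\<omega>2 \<in> {\<omega>'\<in>\<Omega>. v_erased \<omega>' = v_erased \<omega>}" and eq: "{j. cv \<omega>1 k j} = {j. cv \<omega>2 k j}"
  then have e1: "v_erased \<omega>1 = v_erased \<omega>" and e2: "v_erased \<omega>2 = v_erased \<omega>" by auto
  have "cv \<omega>1 i = cv \<omega>2 i" for i
  proof (cases "i = k")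
    case True
    then show ?thesis using eq by (simp add: set_eq_iff fun_eq_iff)
  next
    case False
    then show ?thesis using v_erased_eqD(3)[OF e1] v_erased_eqD(3)[OF e2] by simp
  qed
  moreover have "cS \<omega>1 = cS \<omega>2" "cB \<omega>1 = cB \<omega>2" using v_erased_eqD(1,2)[OF e1] v_erased_eqD(1,2)[OF e2] by simp_all
  ultimately show "\<omega>1 = \<omega>2" unfolding cS_def cB_def cv_def by (simp add: prod_eq_iff fun_eq_iff)
qed

lemma card_v_erased_fibre_ge:
  assumes om: "\<omega> \<in> \<Omega>"
  shows "2 ^ (m - a k) \<le> card {\<omega>'\<in>\<Omega>. v_erased \<omega>' = v_erased \<omega>}"
proof -
  define fib where "fib = {\<omega>'\<in>\<Omega>. v_erased \<omega>' = v_erased \<omega>}"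
  obtain S B v where omd: "\<omega> = (S,B,v)" by (cases \<omega>) auto
  have "W \<in> (\<lambda>\<omega>'. {j. cv \<omega>' k j}) ` fib" if W: "W \<subseteq> {..<m - a k}" for W
  proof -
    define \<omega>W where "\<omega>W = (S, B, v(k := (\<lambda>j. j \<in> W)))"
    have c: "S \<in> block_partitions n r m" "\<forall>i j l. B i j l \<longrightarrow> i\<in>{1..r} \<and> j < m - a i \<and> l \<in> S i"
        "\<forall>i j. v i j \<longrightarrow> i\<in>{1..r} \<and> j < m - a i"
        "\<forall>i\<in>{1..<k}. S i = cS \<omega>0 i \<and> B i = cB \<omega>0 i \<and> v i = cv \<omega>0 i"
      using om unfolding omd Omega_iff configs_iff by blast+
    have c2: "\<forall>i j. (v(k := (\<lambda>j. j \<in> W))) i j \<longrightarrow> i\<in>{1..r} \<and> j < m - a i"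
      using c(3) W k1 kr by auto
    have c4: "\<forall>i\<in>{1..<k}. S i = cS \<omega>0 i \<and> B i = cB \<omega>0 i \<and> (v(k := (\<lambda>j. j \<in> W))) i = cv \<omega>0 i"
      using c(4) by auto
    have "\<omega>W \<in> \<Omega>" unfolding \<omega>W_def Omega_iff configs_iff
      by (intro conjI) (rule c(1), rule c(2), rule c2, rule c4)
    then have "\<omega>W \<in> fib" unfolding fib_def v_erased_def omd \<omega>W_def by (simp add: cS_def cB_def cv_def)
    moreover have "{j. cv \<omega>W k j} = W" unfolding \<omega>W_def by (simp add: cv_def)
    ultimately show ?thesis by force
  qed
  then have "Pow {..<m - a k} \<subseteq> (\<lambda>\<omega>'. {j. cv \<omega>' k j}) ` fib" by blast
  moreover have "finite fib" unfolding fib_def using finite_Omega by auto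
  ultimately have "card (Pow {..<m - a k}) \<le> card fib"
    by (meson card_image_le card_mono finite_imageI order_trans)
  then show ?thesis unfolding fib_def by (simp add: card_Pow)
qed

text \<open>On a fibre of v_erased only v_k varies, uniformly over all 2^(m - a_k) vectors; but
  mu_k \<noteq> 0 forces v_k to be the image B_k x of one of the 2^(m - h_k) points x of the subcube.\<close>
lemma card_overconstrained_le:
  "real (card (overconstrained_event \<inter> \<Omega>)) \<le> 1 / 2^T * real (card \<Omega>)"
proof (rule card_Int_le_by_fibres[OF finite_Omega, where g=v_erased])
  fix \<omega> assume om: "\<omega> \<in> \<Omega>"
  define fib where "fib = {\<omega>'\<in>\<Omega>. v_erased \<omega>' = v_erased \<omega>}"
  define R where "R = m - a k"
  define S where "S = cS \<omega> k"
  define X where "X = {x \<in> S \<rightarrow>\<^sub>E (UNIV::bool set). \<forall>l\<in>HS \<inter> S. x l = y l}"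
  define \<phi> where "\<phi> x = {j. j < R \<and> odd (card {l\<in>S. cB \<omega> k j l \<and> x l})}" for x
  have kr': "k \<in> {1..r}" using k1 kr by auto
  have finS: "finite S" unfolding S_def using Omega_block[OF om kr'] by simp
  have finX: "finite X" unfolding X_def using finS by (auto intro: finite_subset[OF _ finite_PiE[OF finS]])
  have codim_fib: "block_codim \<omega>' k = block_codim \<omega> k" if "\<omega>' \<in> fib" for \<omega>'
    using that v_erased_eqD(1)[of \<omega>' \<omega>] unfolding fib_def block_codim_def by simp
  have "card (overconstrained_event \<inter> fib) * 2 ^ T \<le> card fib"
  proof (cases "a k + T \<le> block_codim \<omega> k")
    case False
    then have "overconstrained_event \<inter> fib = {}" using codim_fib unfolding overconstrained_event_def by auto
    then show ?thesis by simp
  next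
    case True
    have sub: "(\<lambda>\<omega>'. {j. cv \<omega>' k j}) ` (overconstrained_event \<inter> fib) \<subseteq> \<phi> ` X"
    proof
      fix W assume "W \<in> (\<lambda>\<omega>'. {j. cv \<omega>' k j}) ` (overconstrained_event \<inter> fib)"
      then obtain \<omega>' where om': "\<omega>' \<in> overconstrained_event" "\<omega>' \<in> fib" and W: "W = {j. cv \<omega>' k j}" by auto
      have \<omega>'\<Omega>: "\<omega>' \<in> \<Omega>" and same: "cS \<omega>' = cS \<omega>" "cB \<omega>' = cB \<omega>"
        using om'(2) v_erased_eqD(1,2)[of \<omega>' \<omega>] unfolding fib_def by simp_all
      obtain x where x: "x \<in> cS \<omega>' k \<rightarrow>\<^sub>E (UNIV::bool set)" "\<forall>l\<in>HS \<inter> cS \<omega>' k. x l = y l" "block_sat m a \<omega>' k x"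
        using block_mu_nonzero_witness om'(1) unfolding overconstrained_event_def by blast
      have "cv \<omega>' k j \<Longrightarrow> j < R" for j
        using Omega_configs[OF \<omega>'\<Omega>] unfolding configs_def R_def by auto
      moreover have "\<forall>j < R. odd (card {l\<in>S. cB \<omega> k j l \<and> x l}) = cv \<omega>' k j"
        using x(3) same unfolding block_sat_def R_def S_def by simp
      ultimately have "W = \<phi> x" unfolding W \<phi>_def by auto
      moreover have "x \<in> X" using x same unfolding X_def S_def by simp
      ultimately show "W \<in> \<phi> ` X" by auto
    qed
    have "card (overconstrained_event \<inter> fib) = card ((\<lambda>\<omega>'. {j. cv \<omega>' k j}) ` (overconstrained_event \<inter> fib))"
    proof (rule card_image[symmetric], rule inj_on_subset[OF inj_on_v_erased_fibre])
      show "overconstrained_event \<inter> fib \<subseteq> {\<omega>'\<in>\<Omega>. v_erased \<omega>' = v_erased \<omega>}"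
        unfolding fib_def by blast
    qed
    also have "\<dots> \<le> card X"
      using sub finX by (meson card_image_le card_mono finite_imageI order_trans)
    also have "card X = 2 ^ (m - block_codim \<omega> k)"
      unfolding X_def using card_subcube[OF finS] card_block_free(1)[OF om kr'] unfolding S_def by simp
    finally have "card (overconstrained_event \<inter> fib) * 2 ^ T \<le> 2 ^ (m - block_codim \<omega> k + T)"
      by (simp add: power_add)
    also have "\<dots> \<le> 2 ^ R"
      using True card_block_free(2)[OF om kr'] unfolding R_def by (intro power_increasing) auto
    also have "\<dots> \<le> card fib" using card_v_erased_fibre_ge[OF om] unfolding fib_def R_def .
    finally show ?thesis .
  qed
  then show "real (card (overconstrained_event \<inter> {\<omega>'\<in>\<Omega>. v_erased \<omega>' = v_erased \<omega>}))
    \<le> 1 / 2 ^ T * real (card {\<omega>'\<in>\<Omega>. v_erased \<omega>' = v_erased \<omega>})"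
    unfolding fib_def by (rule real_card_le_inverse_two_pow)
qed

lemma block_mu_eq_if_rows_independent:
  assumes om: "\<omega> \<in> \<Omega>" and i: "i \<in> {1..r}"
    and indep: "\<forall>u\<in>{..<m - a i} \<rightarrow>\<^sub>E (UNIV::bool set). (\<exists>j<m - a i. u j) \<longrightarrow>
                  (\<exists>l\<in>cS \<omega> i - HS. odd (card {j\<in>{..<m - a i}. u j \<and> cB \<omega> i j l}))"
  shows "block_mu \<omega> i = 2 powr (real (a i) - real (block_codim \<omega> i))"
proof -
  have "block_mu \<omega> i * 2 ^ (m - a i) = 2 ^ card (cS \<omega> i - HS)"
    using card_affine_solutions_subcube[OF Omega_block(3)[OF om i] indep]
    unfolding block_mu_def muiH_def block_sat_def by (simp add: Int_commute)
  then have "block_mu \<omega> i = 2 ^ (m - block_codim \<omega> i) / 2 ^ (m - a i)"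
    using card_block_free(1)[OF om i] by (simp add: field_simps)
  also have "\<dots> = 2 powr (real (m - block_codim \<omega> i) - real (m - a i))"
    by (simp add: powr_diff powr_realpow)
  also have "real (m - block_codim \<omega> i) - real (m - a i) = real (a i) - real (block_codim \<omega> i)"
  proof -
    have "a i < m" using am i by blast
    then show ?thesis using card_block_free(2)[OF om i] by (simp add: of_nat_diff)
  qed
  finally show ?thesis .
qed

lemma free_columns_erased_eqD:
  assumes e: "free_columns_erased i \<omega>' = free_columns_erased i \<omega>"
  shows "cS \<omega>' = cS \<omega>" "cv \<omega>' = cv \<omega>"
    "\<And>i' j l. \<not> (i' = i \<and> j < m - a i \<and> l \<in> cS \<omega> i - HS) \<Longrightarrow> cB \<omega>' i' j l = cB \<omega> i' j l"
proof -
  show S: "cS \<omega>' = cS \<omega>" and "cv \<omega>' = cv \<omega>" using e unfolding free_columns_erased_def by simp_all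
  have fe: "(\<lambda>i' j l. if i' = i \<and> j < m - a i \<and> l \<in> cS \<omega>' i - HS then False else cB \<omega>' i' j l)
      = (\<lambda>i' j l. if i' = i \<and> j < m - a i \<and> l \<in> cS \<omega> i - HS then False else cB \<omega> i' j l)"
    using e unfolding free_columns_erased_def prod.inject by (rule conjunct1[OF conjunct2])
  fix i' j l assume "\<not> (i' = i \<and> j < m - a i \<and> l \<in> cS \<omega> i - HS)"
  then show "cB \<omega>' i' j l = cB \<omega> i' j l"
    using S fun_cong[OF fun_cong[OF fun_cong[OF fe, of i'], of j], of l] by (auto split: if_splits)
qed

lemma inj_on_free_columns_fibre:
  "inj_on (\<lambda>\<omega>'. {p \<in> {..<m - a i} \<times> (cS \<omega> i - HS). cB \<omega>' i (fst p) (snd p)})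
     {\<omega>'\<in>\<Omega>. free_columns_erased i \<omega>' = free_columns_erased i \<omega>}"
proof (rule inj_onI)
  fix \<omega>1 \<omega>2 assume "\<omega>1 \<in> {\<omega>'\<in>\<Omega>. free_columns_erased i \<omega>' = free_columns_erased i \<omega>}"
    and "\<omega>2 \<in> {\<omega>'\<in>\<Omega>. free_columns_erased i \<omega>' = free_columns_erased i \<omega>}"
    and eq: "{p \<in> {..<m - a i} \<times> (cS \<omega> i - HS). cB \<omega>1 i (fst p) (snd p)}
           = {p \<in> {..<m - a i} \<times> (cS \<omega> i - HS). cB \<omega>2 i (fst p) (snd p)}"
  then have e1: "free_columns_erased i \<omega>1 = free_columns_erased i \<omega>"
    and e2: "free_columns_erased i \<omega>2 = free_columns_erased i \<omega>" by auto
  have "cB \<omega>1 i' j l = cB \<omega>2 i' j l" for i' j l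
  proof (cases "i' = i \<and> j < m - a i \<and> l \<in> cS \<omega> i - HS")
    case True
    then show ?thesis using eq by (auto simp: set_eq_iff)
  next
    case False
    then show ?thesis using free_columns_erased_eqD(3)[OF e1] free_columns_erased_eqD(3)[OF e2] by simp
  qed
  moreover have "cS \<omega>1 = cS \<omega>2" "cv \<omega>1 = cv \<omega>2"
    using free_columns_erased_eqD(1,2)[OF e1] free_columns_erased_eqD(1,2)[OF e2] by simp_all
  ultimately show "\<omega>1 = \<omega>2" unfolding cS_def cB_def cv_def by (simp add: prod_eq_iff fun_eq_iff)
qed

lemma card_free_columns_fibre_ge:
  assumes om: "\<omega> \<in> \<Omega>" and iK: "i \<in> {k<..r}"
  shows "2 ^ ((m - a i) * card (cS \<omega> i - HS)) \<le> card {\<omega>'\<in>\<Omega>. free_columns_erased i \<omega>' = free_columns_erased i \<omega>}"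
proof -
  define fib where "fib = {\<omega>'\<in>\<Omega>. free_columns_erased i \<omega>' = free_columns_erased i \<omega>}"
  define R where "R = m - a i"
  obtain S B v where omd: "\<omega> = (S,B,v)" by (cases \<omega>) auto
  define F where "F = S i - HS"
  define par where "par \<omega>' = {p \<in> {..<R} \<times> F. cB \<omega>' i (fst p) (snd p)}" for \<omega>' :: config
  have ir: "i \<in> {1..r}" using iK k1 by auto
  have finF: "finite F" unfolding F_def using Omega_block(3)[OF om ir] omd by (simp add: cS_def)
  have "M \<in> par ` fib" if M: "M \<subseteq> {..<R} \<times> F" for M
  proof -
    define B' where "B' = (\<lambda>i' j l. if i' = i \<and> j < R \<and> l \<in> F then (j,l) \<in> M else B i' j l)"
    define \<omega>M where "\<omega>M = (S, B', v)"
    have c: "S \<in> block_partitions n r m" "\<forall>i j l. B i j l \<longrightarrow> i\<in>{1..r} \<and> j < m - a i \<and> l \<in> S i"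
        "\<forall>i j. v i j \<longrightarrow> i\<in>{1..r} \<and> j < m - a i"
        "\<forall>i\<in>{1..<k}. S i = cS \<omega>0 i \<and> B i = cB \<omega>0 i \<and> v i = cv \<omega>0 i"
      using om unfolding omd Omega_iff configs_iff by blast+
    have c2: "\<forall>i' j l. B' i' j l \<longrightarrow> i'\<in>{1..r} \<and> j < m - a i' \<and> l \<in> S i'"
      using c(2) ir M unfolding B'_def R_def F_def by (auto split: if_splits)
    have c3: "\<forall>i'\<in>{1..<k}. S i' = cS \<omega>0 i' \<and> B' i' = cB \<omega>0 i' \<and> v i' = cv \<omega>0 i'"
      using c(4) iK unfolding B'_def by auto
    have "\<omega>M \<in> \<Omega>" unfolding \<omega>M_def Omega_iff configs_iff
      by (intro conjI) (rule c(1), rule c2, rule c(3), rule c3)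
    moreover have "free_columns_erased i \<omega>M = free_columns_erased i \<omega>"
    proof -
      have "(\<lambda>i' j l. if i' = i \<and> j < m - a i \<and> l \<in> S i - HS then False else B' i' j l)
          = (\<lambda>i' j l. if i' = i \<and> j < m - a i \<and> l \<in> S i - HS then False else B i' j l)"
        unfolding B'_def R_def F_def by (intro ext) auto
      then show ?thesis unfolding free_columns_erased_def \<omega>M_def omd cS_def cB_def cv_def fst_conv snd_conv
        by (simp only: prod.inject simp_thms)
    qed
    ultimately have "\<omega>M \<in> fib" unfolding fib_def by simp
    moreover have "par \<omega>M = M" using M unfolding par_def \<omega>M_def B'_def by (auto simp: cB_def)
    ultimately show ?thesis by force
  qed
  then have "Pow ({..<R} \<times> F) \<subseteq> par ` fib" by blast
  moreover have "finite fib" unfolding fib_def using finite_Omega by auto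
  ultimately have "card (Pow ({..<R} \<times> F)) \<le> card fib"
    by (meson card_image_le card_mono finite_imageI order_trans)
  then show ?thesis using finF unfolding fib_def R_def F_def omd
    by (simp add: card_Pow card_cartesian_product cS_def)
qed

text \<open>On a fibre of free_columns_erased only the columns of B_i outside H vary. The factor
  mu_i is exact unless some nonzero combination of rows of B_i vanishes on all those columns,
  which happens for at most 2^R * 2^((R-1)|F|) of the 2^(R|F|) choices.\<close>
lemma card_wrong_mu_le:
  assumes iK: "i \<in> {k<..r}"
  shows "real (card (wrong_mu_event i \<inter> \<Omega>)) \<le> 1 / 2^T * real (card \<Omega>)"
proof (rule card_Int_le_by_fibres[OF finite_Omega, where g="free_columns_erased i"])
  fix \<omega> assume om: "\<omega> \<in> \<Omega>"
  define fib where "fib = {\<omega>'\<in>\<Omega>. free_columns_erased i \<omega>' = free_columns_erased i \<omega>}"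
  define R where "R = m - a i"
  define F where "F = cS \<omega> i - HS"
  define par where "par \<omega>' = {p \<in> {..<R} \<times> F. cB \<omega>' i (fst p) (snd p)}" for \<omega>' :: config
  have ir: "i \<in> {1..r}" using iK k1 by auto
  have aim: "a i < m" using am ir by blast
  have finF: "finite F" unfolding F_def using Omega_block(3)[OF om ir] by simp
  have cF: "card F = m - block_codim \<omega> i" unfolding F_def using card_block_free(1)[OF om ir] .
  have codim_fib: "block_codim \<omega>' i = block_codim \<omega> i" if "\<omega>' \<in> fib" for \<omega>'
    using that free_columns_erased_eqD(1)[of i \<omega>' \<omega>] unfolding fib_def block_codim_def by simp
  have "card (wrong_mu_event i \<inter> fib) * 2 ^ T \<le> card fib"
  proof (cases "block_codim \<omega> i + T \<le> a i")
    case False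
    then have "wrong_mu_event i \<inter> fib = {}" using codim_fib unfolding wrong_mu_event_def by auto
    then show ?thesis by simp
  next
    case True
    define bad where "bad = {M \<in> Pow ({..<R} \<times> F). \<exists>u\<in>{..<R} \<rightarrow>\<^sub>E (UNIV::bool set). (\<exists>j<R. u j) \<and>
            (\<forall>l\<in>F. even (card {j\<in>{..<R}. u j \<and> (j,l)\<in>M}))}"
    have sub: "par ` (wrong_mu_event i \<inter> fib) \<subseteq> bad"
    proof
      fix M assume "M \<in> par ` (wrong_mu_event i \<inter> fib)"
      then obtain \<omega>' where om': "\<omega>' \<in> wrong_mu_event i" "\<omega>' \<in> fib" "M = par \<omega>'" by auto
      have \<omega>'\<Omega>: "\<omega>' \<in> \<Omega>" and cs': "cS \<omega>' = cS \<omega>"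
        using om'(2) free_columns_erased_eqD(1)[of i \<omega>' \<omega>] unfolding fib_def by simp_all
      have Msub: "M \<in> Pow ({..<R} \<times> F)" using om'(3) unfolding par_def by auto
      show "M \<in> bad"
      proof (rule ccontr)
        assume good: "M \<notin> bad"
        have "\<exists>l\<in>cS \<omega>' i - HS. odd (card {j\<in>{..<R}. u j \<and> cB \<omega>' i j l})"
          if u: "u \<in> {..<R} \<rightarrow>\<^sub>E (UNIV::bool set)" "\<exists>j<R. u j" for u
        proof -
          obtain l where l: "l \<in> F" "odd (card {j\<in>{..<R}. u j \<and> (j,l)\<in>M})"
            using good Msub u unfolding bad_def by auto
          have "{j\<in>{..<R}. u j \<and> (j,l)\<in>M} = {j\<in>{..<R}. u j \<and> cB \<omega>' i j l}"
            using l(1) om'(3) unfolding par_def by auto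
          then show ?thesis using l cs' unfolding F_def by auto
        qed
        then have "block_mu \<omega>' i = 2 powr (real (a i) - real (block_codim \<omega>' i))"
          unfolding R_def by (intro block_mu_eq_if_rows_independent[OF \<omega>'\<Omega> ir]) blast
        then show False using om'(1) unfolding wrong_mu_event_def by simp
      qed
    qed
    have "card (wrong_mu_event i \<inter> fib) = card (par ` (wrong_mu_event i \<inter> fib))"
    proof (rule card_image[symmetric], rule inj_on_subset)
      show "inj_on par fib" using inj_on_free_columns_fibre unfolding par_def fib_def R_def F_def .
    qed blast
    also have "\<dots> \<le> card bad"
      by (rule card_mono[OF _ sub]) (use finF in \<open>auto simp: bad_def\<close>)
    also have "\<dots> \<le> 2 ^ R * 2 ^ ((R-1) * card F)"
      unfolding bad_def by (rule card_matrices_dependent_rows[OF finF])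
    finally have "card (wrong_mu_event i \<inter> fib) * 2 ^ T \<le> 2 ^ (R + (R-1) * card F + T)"
      by (simp add: power_add)
    also have "\<dots> \<le> 2 ^ (R * card F)"
    proof (rule power_increasing)
      have "0 < R" using aim unfolding R_def by simp
      then have "R * card F = (R-1) * card F + card F" by (cases R) simp_all
      moreover have "R + T \<le> card F" using cF True card_block_free(2)[OF om ir] aim unfolding R_def by auto
      ultimately show "R + (R-1) * card F + T \<le> R * card F" by linarith
    qed simp
    also have "\<dots> \<le> card fib"
      using card_free_columns_fibre_ge[OF om iK] unfolding fib_def R_def F_def .
    finally show ?thesis .
  qed
  then show "real (card (wrong_mu_event i \<inter> {\<omega>'\<in>\<Omega>. free_columns_erased i \<omega>' = free_columns_erased i \<omega>}))
    \<le> 1 / 2 ^ T * real (card {\<omega>'\<in>\<Omega>. free_columns_erased i \<omega>' = free_columns_erased i \<omega>})"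
    unfolding fib_def by (rule real_card_le_inverse_two_pow)
qed

definition Parts_given where "Parts_given = {S \<in> block_partitions n r m. \<forall>j\<in>{1..<k}. S j = cS \<omega>0 j}"
definition B_entries where "B_entries S = Sigma {k..r} (\<lambda>i. {..<m - a i} \<times> S i)" for S :: "nat \<Rightarrow> nat set"
definition v_entries where "v_entries = Sigma {k..r} (\<lambda>i. {..<m - a i})"
definition fibre_card where "fibre_card = 2 ^ (\<Sum>i\<in>{k..r}. (m - a i) * m) * 2 ^ card v_entries"

lemma cS_in_Parts:
  assumes "\<omega> \<in> \<Omega>" shows "cS \<omega> \<in> Parts_given"
proof -
  have "cS \<omega> \<in> block_partitions n r m" using Omega_configs[OF assms] unfolding configs_def by simp
  moreover have "\<forall>j\<in>{1..<k}. cS \<omega> j = cS \<omega>0 j" using assms unfolding configs_given_def by simp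
  ultimately show ?thesis unfolding Parts_given_def by simp
qed

lemma Omega_fixed_blocks:
  assumes "\<omega> \<in> \<Omega>" "i < k"
  shows "cB \<omega> i = cB \<omega>0 i" "cv \<omega> i = cv \<omega>0 i"
proof -
  have c: "\<omega> \<in> configs n r m a" using assms(1) by (rule Omega_configs)
  show "cB \<omega> i = cB \<omega>0 i"
  proof (cases "i = 0")
    case True
    have h1: "\<And>j l. \<not> cB \<omega> 0 j l" using c unfolding configs_def by fastforce
    have h2: "\<And>j l. \<not> cB \<omega>0 0 j l" using om0 unfolding configs_def by fastforce
    show ?thesis using True h1 h2 by (intro ext) simp
  next
    case False
    then show ?thesis using assms unfolding configs_given_def by auto
  qed
  show "cv \<omega> i = cv \<omega>0 i"
  proof (cases "i = 0")
    case True
    have h1: "\<And>j. \<not> cv \<omega> 0 j" using c unfolding configs_def by fastforce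
    have h2: "\<And>j. \<not> cv \<omega>0 0 j" using om0 unfolding configs_def by fastforce
    show ?thesis using True h1 h2 by (intro ext) simp
  next
    case False
    then show ?thesis using assms unfolding configs_given_def by auto
  qed
qed

definition encode_entries :: "config \<Rightarrow> (nat \<times> nat \<times> nat) set \<times> (nat \<times> nat) set" where
  "encode_entries \<omega> = ({p. k \<le> fst p \<and> cB \<omega> (fst p) (fst (snd p)) (snd (snd p))},
                         {p. k \<le> fst p \<and> cv \<omega> (fst p) (snd p)})"
definition decode_entries :: "(nat \<Rightarrow> nat set) \<Rightarrow> (nat \<times> nat \<times> nat) set \<times> (nat \<times> nat) set \<Rightarrow> config" where
  "decode_entries S XY = (S, \<lambda>i j l. if i < k then cB \<omega>0 i j l else (i,(j,l)) \<in> fst XY,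
                              \<lambda>i j. if i < k then cv \<omega>0 i j else (i,j) \<in> snd XY)"

lemma decode_encode_entries:
  assumes omO: "\<omega> \<in> \<Omega>"
  shows "decode_entries (cS \<omega>) (encode_entries \<omega>) = \<omega>"
proof -
  have "cB \<omega> = (\<lambda>i j l. if i < k then cB \<omega>0 i j l else (i,(j,l)) \<in> fst (encode_entries \<omega>))"
  proof (intro ext)
    fix i j l show "cB \<omega> i j l = (if i < k then cB \<omega>0 i j l else (i,(j,l)) \<in> fst (encode_entries \<omega>))"
      by (cases "i < k") (simp_all add: encode_entries_def Omega_fixed_blocks[OF omO])
  qed
  moreover have "cv \<omega> = (\<lambda>i j. if i < k then cv \<omega>0 i j else (i,j) \<in> snd (encode_entries \<omega>))"
  proof (intro ext)
    fix i j show "cv \<omega> i j = (if i < k then cv \<omega>0 i j else (i,j) \<in> snd (encode_entries \<omega>))"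
      by (cases "i < k") (simp_all add: encode_entries_def Omega_fixed_blocks[OF omO])
  qed
  ultimately show ?thesis unfolding decode_entries_def using config_components[of \<omega>] by simp
qed

lemma encode_decode_entries:
  assumes X: "X \<subseteq> B_entries S" and Y: "Y \<subseteq> v_entries"
  shows "encode_entries (decode_entries S (X, Y)) = (X, Y)"
proof -
  have Xk: "k \<le> fst p" if "p \<in> X" for p using X that unfolding B_entries_def by auto
  have Yk: "k \<le> fst p" if "p \<in> Y" for p using Y that unfolding v_entries_def by auto
  have e1: "{p. k \<le> fst p \<and> (if fst p < k then cB \<omega>0 (fst p) (fst (snd p)) (snd (snd p)) else (fst p, fst (snd p), snd (snd p)) \<in> X)} = X"
  proof (rule set_eqI)
    fix p :: "nat \<times> nat \<times> nat"
    show "p \<in> {p. k \<le> fst p \<and> (if fst p < k then cB \<omega>0 (fst p) (fst (snd p)) (snd (snd p)) else (fst p, fst (snd p), snd (snd p)) \<in> X)} \<longleftrightarrow> p \<in> X"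
      using Xk[of p] by (cases "fst p < k") auto
  qed
  have e2: "{p. k \<le> fst p \<and> (if fst p < k then cv \<omega>0 (fst p) (snd p) else (fst p, snd p) \<in> Y)} = Y"
  proof (rule set_eqI)
    fix p :: "nat \<times> nat"
    show "p \<in> {p. k \<le> fst p \<and> (if fst p < k then cv \<omega>0 (fst p) (snd p) else (fst p, snd p) \<in> Y)} \<longleftrightarrow> p \<in> Y"
      using Yk[of p] by (cases "fst p < k") auto
  qed
  show ?thesis unfolding encode_entries_def decode_entries_def cB_def cv_def fst_conv snd_conv
    using e1[unfolded cB_def] e2[unfolded cv_def] by (simp only: prod.inject simp_thms)
qed

lemma encode_entries_in:
  assumes omO: "\<omega> \<in> \<Omega>"
  shows "encode_entries \<omega> \<in> Pow (B_entries (cS \<omega>)) \<times> Pow v_entries"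
proof -
  have h: "\<forall>i j l. cB \<omega> i j l \<longrightarrow> i\<in>{1..r} \<and> j < m - a i \<and> l \<in> cS \<omega> i"
    "\<forall>i j. cv \<omega> i j \<longrightarrow> i\<in>{1..r} \<and> j < m - a i"
    using Omega_configs[OF omO] unfolding configs_def by simp_all
  have "fst (encode_entries \<omega>) \<subseteq> B_entries (cS \<omega>)"
  proof
    fix p assume "p \<in> fst (encode_entries \<omega>)"
    then have "k \<le> fst p" "cB \<omega> (fst p) (fst (snd p)) (snd (snd p))" unfolding encode_entries_def by auto
    then show "p \<in> B_entries (cS \<omega>)" using h(1) unfolding B_entries_def by (cases p) auto
  qed
  moreover have "snd (encode_entries \<omega>) \<subseteq> v_entries"
  proof
    fix p assume "p \<in> snd (encode_entries \<omega>)"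
    then have "k \<le> fst p" "cv \<omega> (fst p) (snd p)" unfolding encode_entries_def by auto
    then show "p \<in> v_entries" using h(2) unfolding v_entries_def by (cases p) auto
  qed
  ultimately show ?thesis by (simp add: mem_Times_iff)
qed

lemma decode_entries_in:
  assumes SP: "S \<in> Parts_given" and X: "X \<subseteq> B_entries S" and Y: "Y \<subseteq> v_entries"
  shows "decode_entries S (X, Y) \<in> \<Omega>"
proof -
  have Sbp: "S \<in> block_partitions n r m" and Sag: "\<forall>j\<in>{1..<k}. S j = cS \<omega>0 j"
    using SP unfolding Parts_given_def by auto
  have c0: "\<forall>i j l. cB \<omega>0 i j l \<longrightarrow> i\<in>{1..r} \<and> j < m - a i \<and> l \<in> cS \<omega>0 i"
      "\<forall>i j. cv \<omega>0 i j \<longrightarrow> i\<in>{1..r} \<and> j < m - a i"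
    using om0 unfolding configs_def by simp_all
  have cB': "\<forall>i j l. (if i < k then cB \<omega>0 i j l else (i,(j,l)) \<in> X) \<longrightarrow> i\<in>{1..r} \<and> j < m - a i \<and> l \<in> S i"
  proof (intro allI impI)
    fix i j l assume h: "if i < k then cB \<omega>0 i j l else (i,(j,l)) \<in> X"
    show "i\<in>{1..r} \<and> j < m - a i \<and> l \<in> S i"
    proof (cases "i < k")
      case True
      then have "cB \<omega>0 i j l" using h by simp
      then have "i\<in>{1..r} \<and> j < m - a i \<and> l \<in> cS \<omega>0 i" using c0 by blast
      moreover then have "S i = cS \<omega>0 i" using Sag True by auto
      ultimately show ?thesis by simp
    next
      case False
      then show ?thesis using h X k1 unfolding B_entries_def by auto
    qed
  qed
  have cv': "\<forall>i j. (if i < k then cv \<omega>0 i j else (i,j) \<in> Y) \<longrightarrow> i\<in>{1..r} \<and> j < m - a i"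
  proof (intro allI impI)
    fix i j assume h: "if i < k then cv \<omega>0 i j else (i,j) \<in> Y"
    show "i\<in>{1..r} \<and> j < m - a i"
    proof (cases "i < k")
      case True then show ?thesis using h c0(2) by simp
    next
      case False then show ?thesis using h Y k1 unfolding v_entries_def by auto
    qed
  qed
  have ag: "\<forall>i\<in>{1..<k}. S i = cS \<omega>0 i \<and> (\<lambda>j l. if i < k then cB \<omega>0 i j l else (i,(j,l)) \<in> X) = cB \<omega>0 i
        \<and> (\<lambda>j. if i < k then cv \<omega>0 i j else (i,j) \<in> Y) = cv \<omega>0 i"
    using Sag by simp
  show ?thesis unfolding decode_entries_def fst_conv snd_conv Omega_iff configs_iff
    by (intro conjI) (rule Sbp, rule cB', rule cv', rule ag)
qed

lemma card_Omega_partition: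
  assumes SP: "S \<in> Parts_given"
  shows "card {\<omega>\<in>\<Omega>. cS \<omega> = S} = fibre_card"
proof -
  have Sbp: "S \<in> block_partitions n r m" using SP unfolding Parts_given_def by auto
  have finSi: "finite (S i)" if "i \<in> {1..r}" for i using block_partitionsD(1)[OF Sbp that] finite_subset by blast
  have "bij_betw encode_entries {\<omega>\<in>\<Omega>. cS \<omega> = S} (Pow (B_entries S) \<times> Pow v_entries)"
  proof (rule bij_betw_byWitness[where f'="decode_entries S"])
    show "\<forall>\<omega>\<in>{\<omega>\<in>\<Omega>. cS \<omega> = S}. decode_entries S (encode_entries \<omega>) = \<omega>"
      using decode_encode_entries by auto
    show "\<forall>XY\<in>Pow (B_entries S) \<times> Pow v_entries. encode_entries (decode_entries S XY) = XY"
      using encode_decode_entries by auto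
    show "encode_entries ` {\<omega>\<in>\<Omega>. cS \<omega> = S} \<subseteq> Pow (B_entries S) \<times> Pow v_entries"
    proof (rule image_subsetI)
      fix \<omega> assume "\<omega> \<in> {\<omega>\<in>\<Omega>. cS \<omega> = S}"
      then show "encode_entries \<omega> \<in> Pow (B_entries S) \<times> Pow v_entries"
        using encode_entries_in[of \<omega>] by simp
    qed
    show "decode_entries S ` (Pow (B_entries S) \<times> Pow v_entries) \<subseteq> {\<omega>\<in>\<Omega>. cS \<omega> = S}"
    proof (rule image_subsetI)
      fix XY assume "XY \<in> Pow (B_entries S) \<times> Pow v_entries"
      then obtain X Y where "XY = (X, Y)" "X \<subseteq> B_entries S" "Y \<subseteq> v_entries" by auto
      moreover have "cS (decode_entries S (X, Y)) = S" unfolding decode_entries_def cS_def by simp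
      ultimately show "decode_entries S XY \<in> {\<omega>\<in>\<Omega>. cS \<omega> = S}"
        using decode_entries_in[OF SP] by simp
    qed
  qed
  then have "card {\<omega>\<in>\<Omega>. cS \<omega> = S} = card (Pow (B_entries S) \<times> Pow v_entries)"
    by (rule bij_betw_same_card)
  also have "\<dots> = 2 ^ card (B_entries S) * 2 ^ card v_entries"
  proof -
    have "finite (B_entries S)" unfolding B_entries_def
      using finSi k1 by (intro finite_SigmaI) auto
    moreover have "finite v_entries" unfolding v_entries_def by auto
    ultimately show ?thesis by (simp add: card_cartesian_product card_Pow)
  qed
  also have "card (B_entries S) = (\<Sum>i\<in>{k..r}. (m - a i) * m)"
  proof -
    have "card (B_entries S) = (\<Sum>i\<in>{k..r}. card ({..<m - a i} \<times> S i))" unfolding B_entries_def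
      by (rule card_SigmaI) (use finSi k1 in auto)
    also have "\<dots> = (\<Sum>i\<in>{k..r}. (m - a i) * m)"
    proof (rule sum.cong)
      fix i assume "i \<in> {k..r}"
      then have "i \<in> {1..r}" using k1 by auto
      then show "card ({..<m - a i} \<times> S i) = (m - a i) * m" using block_partitionsD(2)[OF Sbp] by (simp add: card_cartesian_product)
    qed simp
    finally show ?thesis .
  qed
  finally show ?thesis unfolding fibre_card_def .
qed

lemma finite_Parts: "finite Parts_given"
  unfolding Parts_given_def by (rule finite_subset[OF _ finite_block_partitions]) auto

lemma card_Omega_partition_in:
  assumes W: "W \<subseteq> Parts_given"
  shows "card {\<omega>\<in>\<Omega>. cS \<omega> \<in> W} = fibre_card * card W"
proof -
  have finW: "finite W" using W finite_Parts finite_subset by auto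
  have eq: "{\<omega>\<in>\<Omega>. cS \<omega> \<in> W} = (\<Union>S\<in>W. {\<omega>\<in>\<Omega>. cS \<omega> = S})" by auto
  have "card (\<Union>S\<in>W. {\<omega>\<in>\<Omega>. cS \<omega> = S}) = (\<Sum>S\<in>W. card {\<omega>\<in>\<Omega>. cS \<omega> = S})"
    by (rule card_UN_disjoint[OF finW]) (use finite_Omega in auto)
  also have "\<dots> = (\<Sum>S\<in>W. fibre_card)" using card_Omega_partition W by (intro sum.cong) auto
  finally show ?thesis using eq by simp
qed

lemma m_pos: "0 < m"
proof -
  have "a 1 < m" using am k1 kr by auto
  then show ?thesis by simp
qed

definition exchange where
  "exchange \<omega> i Q = (cS \<omega>)(k := (cS \<omega> k \<union> cS \<omega> i) - Q, i := Q)"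

lemma exchange_in_Parts:
  assumes om: "\<omega> \<in> \<Omega>" and iK: "i \<in> {k<..r}" and Q: "Q \<subseteq> cS \<omega> k \<union> cS \<omega> i" "card Q = m"
  shows "exchange \<omega> i Q \<in> Parts_given"
proof -
  have Sbp: "cS \<omega> \<in> block_partitions n r m" and Sag: "\<forall>j\<in>{1..<k}. cS \<omega> j = cS \<omega>0 j"
    using cS_in_Parts[OF om] unfolding Parts_given_def by auto
  have "exchange \<omega> i Q \<in> block_partitions n r m" unfolding exchange_def
    using block_partitions_exchange[OF Sbp _ _ _ Q] k1 kr iK by auto
  moreover have "\<forall>j\<in>{1..<k}. exchange \<omega> i Q j = cS \<omega>0 j" using Sag iK unfolding exchange_def by auto
  ultimately show ?thesis unfolding Parts_given_def by simp
qed

lemma blocks_merged_fibre_eq: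
  assumes om: "\<omega> \<in> \<Omega>" and iK: "i \<in> {k<..r}"
  shows "{\<omega>'\<in>\<Omega>. blocks_merged i \<omega>' = blocks_merged i \<omega>}
    = {\<omega>'\<in>\<Omega>. cS \<omega>' \<in> exchange \<omega> i ` {Q. Q \<subseteq> cS \<omega> k \<union> cS \<omega> i \<and> card Q = m}}"
    (is "?fib = {\<omega>'\<in>\<Omega>. cS \<omega>' \<in> ?\<sigma> ` ?QS}")
proof
  define S where "S = cS \<omega>"
  define U where "U = S k \<union> S i"
  have Sbp: "S \<in> block_partitions n r m" using cS_in_Parts[OF om] unfolding S_def Parts_given_def by auto
  have kr': "k \<in> {1..r}" and ir: "i \<in> {1..r}" and ki: "k \<noteq> i" using k1 kr iK by auto
  show "?fib \<subseteq> {\<omega>'\<in>\<Omega>. cS \<omega>' \<in> ?\<sigma> ` ?QS}"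
  proof
    fix \<omega>' assume o': "\<omega>' \<in> ?fib"
    have o'O: "\<omega>' \<in> \<Omega>" using o' by simp
    define S' where "S' = cS \<omega>'"
    have S'bp: "S' \<in> block_partitions n r m" using cS_in_Parts[OF o'O] unfolding S'_def Parts_given_def by simp
    have ge: "blocks_merged i \<omega>' = blocks_merged i \<omega>" using o' by simp
    have agree: "S' j = S j" if "j \<noteq> k" "j \<noteq> i" for j
      using fun_cong[OF ge, of j] that unfolding blocks_merged_def S'_def S_def by simp
    have pf: "S' i \<subseteq> U" "S' k = U - S' i"
      using block_partitions_agree_outside[OF Sbp S'bp kr' ir ki agree] unfolding U_def by auto
    have "S' = ?\<sigma> (S' i)"
    proof
      fix j show "S' j = ?\<sigma> (S' i) j"
        unfolding exchange_def S_def[symmetric] U_def[symmetric] using pf agree[of j] ki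
        by (cases "j = k"; cases "j = i") auto
    qed
    moreover have "S' i \<in> ?QS" using pf block_partitionsD(2)[OF S'bp ir] unfolding S_def U_def by auto
    ultimately show "\<omega>' \<in> {\<omega>'\<in>\<Omega>. cS \<omega>' \<in> ?\<sigma> ` ?QS}" using o'O unfolding S'_def by auto
  qed
  show "{\<omega>'\<in>\<Omega>. cS \<omega>' \<in> ?\<sigma> ` ?QS} \<subseteq> ?fib"
  proof
    fix \<omega>' assume "\<omega>' \<in> {\<omega>'\<in>\<Omega>. cS \<omega>' \<in> ?\<sigma> ` ?QS}"
    then obtain Q where "\<omega>' \<in> \<Omega>" "cS \<omega>' = ?\<sigma> Q" by auto
    moreover have "(?\<sigma> Q)(k := {}, i := {}) = (cS \<omega>)(k := {}, i := {})" unfolding exchange_def by (intro ext) auto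
    ultimately show "\<omega>' \<in> ?fib" unfolding blocks_merged_def by simp
  qed
qed

lemma card_unbalanced_le:
  assumes iK: "i \<in> {k<..r}"
  shows "real (card (unbalanced_event i \<inter> \<Omega>)) \<le> hypergeometric_tail m (A - 2*T) * real (card \<Omega>)"
proof (rule card_Int_le_by_fibres[OF finite_Omega, where g="blocks_merged i"])
  fix \<omega> assume om: "\<omega> \<in> \<Omega>"
  define D where "D = A - 2*T"
  define t where "t = D div 2"
  define \<rho> where "\<rho> = (4*real m / (4*real m + real D))^t"
  define S where "S = cS \<omega>"
  define fib where "fib = {\<omega>'\<in>\<Omega>. blocks_merged i \<omega>' = blocks_merged i \<omega>}"
  have SP: "S \<in> Parts_given" unfolding S_def by (rule cS_in_Parts[OF om])
  have Sbp: "S \<in> block_partitions n r m" and Sag: "\<forall>j\<in>{1..<k}. S j = cS \<omega>0 j" using SP unfolding Parts_given_def by auto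
  have kr': "k \<in> {1..r}" and ir: "i \<in> {1..r}" and ki: "k \<noteq> i" and kli: "k < i" using k1 kr iK by auto
  define U where "U = S k \<union> S i"
  have cU: "card U = 2*m" unfolding U_def by (rule card_Un_blocks[OF Sbp kr' ir ki])
  have finU: "finite U" using cU m_pos by (metis card.infinite mult_is_0 neq0_conv zero_neq_numeral)
  define QS where "QS = {Q. Q \<subseteq> U \<and> card Q = m}"
  define \<sigma> where "\<sigma> = exchange \<omega> i"
  define Mset where "Mset = HS \<inter> U"
  define u where "u = card Mset"
  define x0 where "x0 = (u + D) div 2 + 1"
  define QSbad where "QSbad = {Q. Q \<subseteq> U \<and> card Q = m \<and> x0 \<le> card (Q \<inter> Mset)}"
  have finQS: "finite QS" unfolding QS_def using finU by auto
  have sP: "\<sigma> Q \<in> Parts_given" if "Q \<in> QS" for Q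
    using exchange_in_Parts[OF om iK] that unfolding \<sigma>_def QS_def U_def S_def by blast
  have inj\<sigma>: "inj_on \<sigma> QS"
  proof (rule inj_onI)
    fix Q1 Q2 assume "\<sigma> Q1 = \<sigma> Q2"
    then have "\<sigma> Q1 i = \<sigma> Q2 i" by simp
    then show "Q1 = Q2" unfolding \<sigma>_def exchange_def by simp
  qed
  have fib_eq: "fib = {\<omega>'\<in>\<Omega>. cS \<omega>' \<in> \<sigma> ` QS}"
    using blocks_merged_fibre_eq[OF om iK] unfolding fib_def \<sigma>_def QS_def U_def S_def .
  have cfib: "card fib = fibre_card * ((2*m) choose m)"
  proof -
    have "card fib = fibre_card * card (\<sigma> ` QS)" unfolding fib_eq by (rule card_Omega_partition_in) (use sP in auto)
    also have "card (\<sigma> ` QS) = card QS" by (rule card_image[OF inj\<sigma>])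
    also have "card QS = (2*m) choose m" unfolding QS_def using n_subsets[OF finU, of m] cU by simp
    finally show ?thesis .
  qed
  have sub: "unbalanced_event i \<inter> fib \<subseteq> {\<omega>'\<in>\<Omega>. cS \<omega>' \<in> \<sigma> ` QSbad}"
  proof
    fix \<omega>' assume o': "\<omega>' \<in> unbalanced_event i \<inter> fib"
    then obtain Q where o'O: "\<omega>' \<in> \<Omega>" and Q: "Q \<in> QS" and cs: "cS \<omega>' = \<sigma> Q" using fib_eq by auto
    have QU: "Q \<subseteq> U" and cQ: "card Q = m" using Q unfolding QS_def by auto
    define q where "q = card (Q \<inter> Mset)"
    have finM: "finite Mset" unfolding Mset_def using finU by simp
    have qu: "q \<le> u" unfolding q_def u_def by (rule card_mono[OF finM]) auto
    have hk: "block_codim \<omega>' k = u - q"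
    proof -
      have "HS \<inter> cS \<omega>' k = Mset - (Q \<inter> Mset)" unfolding cs \<sigma>_def exchange_def Mset_def U_def S_def using ki by auto
      then have "block_codim \<omega>' k = card (Mset - (Q \<inter> Mset))" unfolding block_codim_def by simp
      also have "\<dots> = u - q" unfolding u_def q_def by (rule card_Diff_subset) (use finM in auto)
      finally show ?thesis .
    qed
    have hi: "block_codim \<omega>' i = q"
    proof -
      have "HS \<inter> cS \<omega>' i = Q \<inter> Mset" unfolding cs \<sigma>_def exchange_def Mset_def using QU ki by auto
      then show ?thesis unfolding block_codim_def q_def by simp
    qed
    have "u - q + A < q + 2*T" using o' hk hi unfolding unbalanced_event_def by simp
    then have "u + D < 2*q" unfolding D_def using qu TA by linarith
    then have "x0 \<le> q" unfolding x0_def by linarith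
    then have "Q \<in> QSbad" unfolding QSbad_def q_def using QU cQ by auto
    then show "\<omega>' \<in> {\<omega>'\<in>\<Omega>. cS \<omega>' \<in> \<sigma> ` QSbad}" using o'O cs by auto
  qed
  have QSbQS: "QSbad \<subseteq> QS" unfolding QSbad_def QS_def by auto
  have "card (unbalanced_event i \<inter> fib) \<le> card {\<omega>'\<in>\<Omega>. cS \<omega>' \<in> \<sigma> ` QSbad}"
    by (rule card_mono[OF _ sub]) (use finite_Omega in auto)
  also have "\<dots> = fibre_card * card (\<sigma> ` QSbad)" by (rule card_Omega_partition_in) (use sP QSbQS in auto)
  also have "\<dots> \<le> fibre_card * card QSbad" by (intro mult_le_mono2 card_image_le) (use finQS QSbQS finite_subset in auto)
  finally have c1: "real (card (unbalanced_event i \<inter> fib)) \<le> real fibre_card * real (card QSbad)" by (metis of_nat_le_iff of_nat_mult)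
  have tl: "real (card QSbad) \<le> real ((2*m) choose m) * \<rho>"
    unfolding QSbad_def \<rho>_def
  proof (rule card_subsets_large_Int[OF finU cU])
    show "Mset \<subseteq> U" unfolding Mset_def by auto
    show "card Mset + D \<le> 2 * x0" unfolding x0_def u_def by presburger
    show "2 * t \<le> D" unfolding t_def by linarith
    show "t \<le> m" using half_gap_le_m unfolding t_def D_def .
  qed (rule m_pos)
  have "real (card (unbalanced_event i \<inter> fib)) \<le> real fibre_card * (real ((2*m) choose m) * \<rho>)"
  proof -
    have "real fibre_card * real (card QSbad) \<le> real fibre_card * (real ((2*m) choose m) * \<rho>)"
      using tl by (intro mult_left_mono) auto
    then show ?thesis using c1 by linarith
  qed
  also have "\<dots> = \<rho> * real (card fib)" unfolding cfib by simp
  finally show "real (card (unbalanced_event i \<inter> {\<omega>'\<in>\<Omega>. blocks_merged i \<omega>' = blocks_merged i \<omega>}))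
    \<le> hypergeometric_tail m (A - 2*T) * real (card {\<omega>'\<in>\<Omega>. blocks_merged i \<omega>' = blocks_merged i \<omega>})"
    unfolding fib_def \<rho>_def t_def D_def hypergeometric_tail_def .
qed

lemma card_HS_Int_blocks:
  assumes om: "\<omega> \<in> \<Omega>" and I: "I \<subseteq> {1..r}"
  shows "card (HS \<inter> (\<Union>i\<in>I. cS \<omega> i)) = (\<Sum>i\<in>I. block_codim \<omega> i)"
proof -
  have Sbp: "cS \<omega> \<in> block_partitions n r m" using Omega_configs[OF om] unfolding configs_def by simp
  have finI: "finite I" using I finite_subset by auto
  have "HS \<inter> (\<Union>i\<in>I. cS \<omega> i) = (\<Union>i\<in>I. HS \<inter> cS \<omega> i)" by auto
  moreover have "card (\<Union>i\<in>I. HS \<inter> cS \<omega> i) = (\<Sum>i\<in>I. card (HS \<inter> cS \<omega> i))"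
  proof (rule card_UN_disjoint[OF finI])
    show "\<forall>i\<in>I. finite (HS \<inter> cS \<omega> i)" using Omega_block(3)[OF om] I by auto
    show "\<forall>i\<in>I. \<forall>j\<in>I. i \<noteq> j \<longrightarrow> (HS \<inter> cS \<omega> i) \<inter> (HS \<inter> cS \<omega> j) = {}"
      using block_partitionsD(3)[OF Sbp] I by blast
  qed
  ultimately show ?thesis unfolding block_codim_def by simp
qed

lemma card_HS_eq_sum_block_codim:
  assumes om: "\<omega> \<in> \<Omega>"
  shows "real (card HS) = real (card (HS \<inter> (\<Union>i\<in>{1..k}. cS \<omega> i))) + (\<Sum>i\<in>{k<..r}. real (block_codim \<omega> i))"
proof -
  have "cS \<omega> \<in> block_partitions n r m" using Omega_configs[OF om] by (simp add: configs_def)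
  then have "(\<Union>i\<in>{1..r}. cS \<omega> i) = {1..n}" by (rule block_partitionsD(4))
  then have "card HS = (\<Sum>i\<in>{1..r}. block_codim \<omega> i)"
    using card_HS_Int_blocks[OF om, of "{1..r}"] HS by (simp add: Int_absorb2)
  also have "\<dots> = (\<Sum>i\<in>{1..k}. block_codim \<omega> i) + (\<Sum>i\<in>{k<..r}. block_codim \<omega> i)"
    using k1 kr by (subst sum.union_disjoint[symmetric]) (auto intro: sum.cong)
  also have "(\<Sum>i\<in>{1..k}. block_codim \<omega> i) = card (HS \<inter> (\<Union>i\<in>{1..k}. cS \<omega> i))"
    using kr by (intro card_HS_Int_blocks[OF om, symmetric]) auto
  finally show ?thesis by simp
qed

text \<open>Once block k is satisfiable with few fixed coordinates and no later block carries many
  more, every later block i has at least T free coordinates beyond a_i, so its factor is exact.\<close>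
lemma factorization_if_balanced:
  assumes om: "\<omega> \<in> \<Omega>"
    and few_k: "block_mu \<omega> k \<noteq> 0 \<Longrightarrow> block_codim \<omega> k < a k + T"
    and exact: "\<And>i. i \<in> {k<..r} \<Longrightarrow> block_codim \<omega> i + T \<le> a i \<Longrightarrow>
                  block_mu \<omega> i = 2 powr (real (a i) - real (block_codim \<omega> i))"
    and balanced: "\<And>i. i \<in> {k<..r} \<Longrightarrow> block_codim \<omega> i + 2*T \<le> block_codim \<omega> k + A"
  shows "\<omega> \<in> factorization_event n r m a k HS y"
proof -
  have mu_split: "muH n r m a \<omega> HS y = (\<Prod>i\<in>{1..k}. block_mu \<omega> i) * (\<Prod>i\<in>{k<..r}. block_mu \<omega> i)"
  proof -
    have "{1..r} = {1..k} \<union> {k<..r}" using kr k1 by auto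
    then have "muH n r m a \<omega> HS y = (\<Prod>i\<in>{1..k} \<union> {k<..r}. block_mu \<omega> i)"
      unfolding muH_eq_prod_muiH[OF Omega_configs[OF om] HS] block_mu_def by simp
    also have "\<dots> = (\<Prod>i\<in>{1..k}. block_mu \<omega> i) * (\<Prod>i\<in>{k<..r}. block_mu \<omega> i)"
      by (rule prod.union_disjoint) auto
    finally show ?thesis .
  qed
  show ?thesis
  proof (cases "block_mu \<omega> k = 0")
    case True
    then have "(\<Prod>i\<in>{1..k}. block_mu \<omega> i) = 0" using k1 by (intro prod_zero) auto
    then show ?thesis using mu_split unfolding factorization_event_def block_mu_def by simp
  next
    case False
    have "block_mu \<omega> i = 2 powr (real (a i) - real (block_codim \<omega> i))" if i: "i \<in> {k<..r}" for i
    proof (rule exact[OF i])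
      have "(k+1) * A \<le> i * A" using i by (intro mult_right_mono) auto
      then have "a k + A \<le> a i" using a_eq_mult i k1 kr by auto
      then show "block_codim \<omega> i + T \<le> a i" using few_k[OF False] balanced[OF i] by linarith
    qed
    then have "(\<Prod>i\<in>{k<..r}. block_mu \<omega> i) = 2 powr (\<Sum>i\<in>{k<..r}. real (a i) - real (block_codim \<omega> i))"
      by (simp add: powr_sum)
    also have "(\<Sum>i\<in>{k<..r}. real (a i) - real (block_codim \<omega> i))
        = - real (card HS) + real (card (HS \<inter> (\<Union>i\<in>{1..k}. cS \<omega> i))) + (\<Sum>i\<in>{k<..r}. real (a i))"
      using card_HS_eq_sum_block_codim[OF om] by (simp add: sum_subtractf)
    finally show ?thesis using mu_split unfolding factorization_event_def block_mu_def by simp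
  qed
qed

lemma prob_factorization_event_ge:
  "measure_pmf.prob (pmf_of_set \<Omega>) (factorization_event n r m a k HS y)
     \<ge> 1 - (1 / 2^T + real (r - k) * (1 / 2^T + hypergeometric_tail m (A - 2*T)))"
proof (rule measure_pmf_of_set_ge[OF finite_Omega omega0_in_Omega])
  define p where "p = 1 / (2::real)^T"
  define E1 where "E1 = overconstrained_event \<inter> \<Omega>"
  define E2 where "E2 i = wrong_mu_event i \<inter> \<Omega>" for i
  define E3 where "E3 i = unbalanced_event i \<inter> \<Omega>" for i
  define Bad where "Bad = E1 \<union> (\<Union>i\<in>{k<..r}. E2 i \<union> E3 i)"
  have "\<omega> \<in> factorization_event n r m a k HS y" if "\<omega> \<in> \<Omega>" "\<omega> \<notin> Bad" for \<omega>
  proof (rule factorization_if_balanced[OF \<open>\<omega> \<in> \<Omega>\<close>])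
    show "block_codim \<omega> k < a k + T" if "block_mu \<omega> k \<noteq> 0"
      using that \<open>\<omega> \<in> \<Omega>\<close> \<open>\<omega> \<notin> Bad\<close> unfolding Bad_def E1_def overconstrained_event_def by auto
    fix i assume i: "i \<in> {k<..r}"
    then show "block_mu \<omega> i = 2 powr (real (a i) - real (block_codim \<omega> i))" if "block_codim \<omega> i + T \<le> a i"
      using that \<open>\<omega> \<in> \<Omega>\<close> \<open>\<omega> \<notin> Bad\<close> unfolding Bad_def E2_def wrong_mu_event_def by blast
    show "block_codim \<omega> i + 2*T \<le> block_codim \<omega> k + A"
      using i \<open>\<omega> \<in> \<Omega>\<close> \<open>\<omega> \<notin> Bad\<close> unfolding Bad_def E3_def unbalanced_event_def by (auto simp: not_less)
  qed
  then have "\<Omega> - factorization_event n r m a k HS y \<subseteq> Bad"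
    by blast
  moreover have "finite Bad"
    unfolding Bad_def E1_def E2_def E3_def by (intro finite_UnI finite_UN_I) (auto intro: finite_subset[OF _ finite_Omega])
  ultimately have "card (\<Omega> - factorization_event n r m a k HS y) \<le> card Bad"
    by (rule card_mono[rotated])
  also have "card Bad \<le> card E1 + (\<Sum>i\<in>{k<..r}. card (E2 i) + card (E3 i))"
  proof -
    have "card Bad \<le> card E1 + card (\<Union>i\<in>{k<..r}. E2 i \<union> E3 i)"
      unfolding Bad_def by (rule card_Un_le)
    moreover have "card (\<Union>i\<in>{k<..r}. E2 i \<union> E3 i) \<le> (\<Sum>i\<in>{k<..r}. card (E2 i \<union> E3 i))"
      by (rule card_UN_le) simp
    moreover have "(\<Sum>i\<in>{k<..r}. card (E2 i \<union> E3 i)) \<le> (\<Sum>i\<in>{k<..r}. card (E2 i) + card (E3 i))"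
      by (intro sum_mono card_Un_le)
    ultimately show ?thesis by linarith
  qed
  finally have "real (card (\<Omega> - factorization_event n r m a k HS y))
      \<le> real (card E1 + (\<Sum>i\<in>{k<..r}. card (E2 i) + card (E3 i)))"
    by (rule of_nat_mono)
  also have "\<dots> = real (card E1) + (\<Sum>i\<in>{k<..r}. real (card (E2 i)) + real (card (E3 i)))"
    by simp
  also have "\<dots> \<le> p * real (card \<Omega>) + (\<Sum>i\<in>{k<..r}. p * real (card \<Omega>) + hypergeometric_tail m (A - 2*T) * real (card \<Omega>))"
  proof (intro add_mono sum_mono)
    show "real (card E1) \<le> p * real (card \<Omega>)"
      using card_overconstrained_le unfolding E1_def p_def .
    fix i assume "i \<in> {k<..r}"
    then show "real (card (E2 i)) \<le> p * real (card \<Omega>)"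
        and "real (card (E3 i)) \<le> hypergeometric_tail m (A - 2*T) * real (card \<Omega>)"
      using card_wrong_mu_le card_unbalanced_le unfolding E2_def E3_def p_def by auto
  qed
  also have "\<dots> = (p + real (r - k) * (p + hypergeometric_tail m (A - 2*T))) * real (card \<Omega>)"
    by (simp add: distrib_left distrib_right)
  finally show "real (card (\<Omega> - factorization_event n r m a k HS y))
      \<le> (1 / 2^T + real (r - k) * (1 / 2^T + hypergeometric_tail m (A - 2*T))) * real (card \<Omega>)"
    unfolding p_def .
qed

end

lemma powr_third:
  fixes x :: real assumes "x > 0"
  shows "x powr (1/3) * x powr (1/3) * x powr (1/3) = x" "x powr (2/3) = x powr (1/3) * x powr (1/3)"
proof -
  have "x powr (1/3) * x powr (1/3) * x powr (1/3) = x powr (1/3 + 1/3 + 1/3)" by (simp only: powr_add)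
  also have "x powr (1/3 + 1/3 + 1/3) = x powr 1" by simp
  also have "\<dots> = x" using assms by (simp add: powr_one)
  finally show "x powr (1/3) * x powr (1/3) * x powr (1/3) = x" .
  have "x powr (1/3) * x powr (1/3) = x powr (1/3 + 1/3)" by (simp only: powr_add)
  then show "x powr (2/3) = x powr (1/3) * x powr (1/3)" by simp
qed

section \<open>The parameters of the hard instance\<close>

lemma ln_one_plus_ge_half:
  fixes x :: real
  assumes "0 \<le> x" "x \<le> 1/2"
  shows "x / 2 \<le> ln (1 + x)"
proof -
  have "x - x^2 \<le> ln (1 + x)" using assms by (intro ln_one_plus_pos_lower_bound) auto
  moreover have "x * x \<le> x * (1/2)" using assms by (intro mult_left_mono) auto
  ultimately show ?thesis by (simp add: power2_eq_square)
qed

lemma inverse_one_plus_power_le_exp: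
  fixes x :: real
  assumes "0 \<le> x" "x \<le> 1/2"
  shows "(1 / (1 + x)) ^ t \<le> exp (- (real t * x / 2))"
proof -
  have "exp (real t * ln (1 + x)) = (1 + x) ^ t" using assms by (simp add: exp_of_nat_mult)
  then have "(1 / (1 + x)) ^ t = exp (- (real t * ln (1 + x)))"
    unfolding exp_minus by (simp add: power_one_over inverse_eq_divide)
  moreover have "real t * (x / 2) \<le> real t * ln (1 + x)"
    using ln_one_plus_ge_half[OF assms] by (intro mult_left_mono) auto
  ultimately show ?thesis by simp
qed

text \<open>In terms of \<alpha> = n^(1/3) and \<beta> = L^(1/3) with L = (c+2) log n, the parameters are
  r = \<alpha>/(4\<beta>), m = 4\<alpha>^2\<beta> and a_i = 12 i \<alpha>\<beta>^2, so every estimate below is polynomial in \<alpha>, \<beta>.\<close>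
locale hard_instance =
  fixes c :: real and n r m :: nat and a :: "nat \<Rightarrow> nat"
  assumes c: "c > 0" and n2: "n \<ge> 2" and hr: "real r = hi_r c n" and hm: "real m = hi_m c n"
    and ha: "\<forall>i\<in>{1..r}. real (a i) = hi_a c n i" and r2: "r \<ge> 2"
begin

definition L where "L = (c+2) * log 2 (real n)"
definition T where "T = nat \<lceil>L\<rceil>"
definition A where "A = a 1"
definition \<alpha> where "\<alpha> = real n powr (1/3)"
definition \<beta> where "\<beta> = L powr (1/3)"

lemma L_ge_2: "L \<ge> 2"
proof -
  have "log 2 (real n) \<ge> log 2 2" using n2 by (subst log_le_cancel_iff) auto
  then have "log 2 (real n) \<ge> 1" by simp
  moreover have "c + 2 \<ge> 2" using c by simp
  ultimately have "(c+2) * log 2 (real n) \<ge> 2 * 1" by (intro mult_mono) auto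
  then show ?thesis unfolding L_def by simp
qed

lemma n_pos: "real n > 0" using n2 by simp
lemma alpha_pos: "\<alpha> > 0" unfolding \<alpha>_def using n_pos by simp
lemma beta_pos: "\<beta> > 0" unfolding \<beta>_def using L_ge_2 by simp
lemma beta_cube: "\<beta> * \<beta> * \<beta> = L" unfolding \<beta>_def using powr_third(1) L_ge_2 by simp

lemma r_eq: "real r = \<alpha> / (4 * \<beta>)"
  using hr unfolding hi_r_def \<alpha>_def \<beta>_def L_def[symmetric] by (simp add: powr_divide)

lemma m_eq: "real m = 4 * \<alpha> * \<alpha> * \<beta>"
  using hm unfolding hi_m_def \<alpha>_def \<beta>_def L_def[symmetric] powr_third(2)[OF n_pos] by simp

lemma a_eq: "i \<in> {1..r} \<Longrightarrow> real (a i) = 12 * real i * \<alpha> * \<beta> * \<beta>"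
  using ha unfolding hi_a_def \<alpha>_def \<beta>_def L_def[symmetric] using powr_third(2) L_ge_2 by auto

lemma alpha_ge_8_beta: "\<alpha> \<ge> 8 * \<beta>"
proof -
  have "\<alpha> = 4 * \<beta> * real r" using r_eq beta_pos by (simp add: field_simps)
  moreover have "real r \<ge> 2" using r2 by simp
  ultimately show ?thesis using beta_pos by (simp add: mult_left_mono)
qed

lemma beta_ge_1: "\<beta> \<ge> 1"
proof (rule ccontr)
  assume "\<not> \<beta> \<ge> 1"
  then have "\<beta> < 1" by simp
  then have "\<beta> * \<beta> * \<beta> < 1 * 1 * 1" using beta_pos by (intro mult_strict_mono) auto
  then show False using beta_cube L_ge_2 by simp
qed

lemma A_eq: "real A = 12 * \<alpha> * \<beta> * \<beta>"
  unfolding A_def using a_eq[of 1] r2 by simp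

lemma a_eq_mult: "\<forall>i\<in>{1..r}. a i = i * A"
proof
  fix i assume i: "i \<in> {1..r}"
  have "real (a i) = real i * real A" using a_eq[OF i] A_eq by simp
  then show "a i = i * A" by (metis of_nat_eq_iff of_nat_mult)
qed

lemma a_less_m: "\<forall>i\<in>{1..r}. a i < m"
proof
  fix i assume i: "i \<in> {1..r}"
  have "real i \<le> real r" using i by simp
  then have "real (a i) \<le> 12 * real r * \<alpha> * \<beta> * \<beta>" using a_eq[OF i] alpha_pos beta_pos
    by (simp add: mult_right_mono)
  also have "\<dots> = 3 * \<alpha> * \<alpha> * \<beta>" using r_eq beta_pos by (simp add: field_simps)
  also have "\<dots> < real m" using m_eq alpha_pos beta_pos by simp
  finally show "a i < m" by simp
qed

lemma T_bounds: "real T \<le> L + 1" "L \<le> real T"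
  unfolding T_def using L_ge_2 by (simp_all add: of_nat_nat ceiling_correct)

lemma beta_cube_le: "\<beta> * \<beta> * \<beta> \<le> \<alpha> * \<beta> * \<beta> / 8"
proof -
  have "\<beta> * (\<beta> * \<beta>) \<le> (\<alpha> / 8) * (\<beta> * \<beta>)" using alpha_ge_8_beta beta_pos by (intro mult_right_mono) auto
  then show ?thesis by (simp add: mult_ac)
qed

lemma two_T_le_A: "2 * T \<le> A"
proof -
  have "real (2*T) \<le> 2 * L + 2" using T_bounds by simp
  also have "\<dots> \<le> 4 * L" using L_ge_2 by simp
  also have "\<dots> = 4 * (\<beta> * \<beta> * \<beta>)" using beta_cube by simp
  also have "\<dots> \<le> 12 * \<alpha> * \<beta> * \<beta>" using beta_cube_le alpha_pos beta_pos by (simp add: field_simps)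
  also have "\<dots> = real A" using A_eq by simp
  finally show ?thesis by (simp only: of_nat_le_iff)
qed

definition D where "D = A - 2*T"

lemma D_ge: "real D \<ge> 11 * \<alpha> * \<beta> * \<beta>"
proof -
  have "real D = real A - 2 * real T" unfolding D_def using two_T_le_A by (simp add: of_nat_diff)
  also have "\<dots> \<ge> 12 * \<alpha> * \<beta> * \<beta> - 4 * (\<beta> * \<beta> * \<beta>)" using A_eq T_bounds beta_cube L_ge_2 by simp
  finally show ?thesis using beta_cube_le by simp
qed

lemma D_le: "real D \<le> 12 * \<alpha> * \<beta> * \<beta>"
  unfolding D_def using A_eq two_T_le_A by (simp add: of_nat_diff)

lemma m_pos: "0 < m" using m_eq alpha_pos beta_pos by (metis of_nat_0_less_iff mult_pos_pos zero_less_numeral)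

lemma half_D_le_m: "(A - 2*T) div 2 \<le> m"
proof -
  have "real D \<le> real m"
  proof -
    have "12 * \<alpha> * \<beta> * \<beta> \<le> 4 * \<alpha> * \<alpha> * \<beta>"
    proof -
      have "3 * \<beta> \<le> \<alpha>" using alpha_ge_8_beta beta_pos by simp
      then have "(3 * \<beta>) * (4 * \<alpha> * \<beta>) \<le> \<alpha> * (4 * \<alpha> * \<beta>)" using alpha_pos beta_pos by (intro mult_right_mono) auto
      then show ?thesis by (simp add: mult_ac)
    qed
    then show ?thesis using D_le m_eq by simp
  qed
  then have "D \<le> m" by simp
  then show ?thesis unfolding D_def[symmetric] by simp
qed

definition P where "P = real n powr (-(c+2))"

lemma P_eq: "P = 2 powr (-L)"
proof -
  have "P = (2 powr (log 2 (real n))) powr (-(c+2))" unfolding P_def using n_pos by (simp add: powr_log_cancel)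
  also have "\<dots> = 2 powr (log 2 (real n) * (-(c+2)))" by (rule powr_powr)
  also have "log 2 (real n) * (-(c+2)) = -L" unfolding L_def by (simp add: algebra_simps)
  finally show ?thesis .
qed

lemma P_pos: "P > 0" unfolding P_def using n_pos by simp

lemma inverse_two_pow_T_le_P: "1 / 2^T \<le> P"
proof -
  have "1 / (2::real)^T = 2 powr (- real T)" by (simp add: powr_minus powr_realpow divide_inverse)
  also have "\<dots> \<le> 2 powr (-L)" using T_bounds(2) by (intro powr_mono) auto
  finally show ?thesis using P_eq by simp
qed

lemma hypergeometric_tail_le_P: "hypergeometric_tail m D \<le> P"
proof -
  define t where "t = D div 2"
  define x where "x = real D / (4 * real m)"
  have mpos: "real m > 0" using m_pos by simp
  have "\<alpha> * \<beta> * \<beta> \<ge> 8"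
  proof -
    have "\<alpha> \<ge> 8" using alpha_ge_8_beta beta_ge_1 by linarith
    moreover have "\<beta> * \<beta> \<ge> 1 * 1" using beta_ge_1 by (intro mult_mono) auto
    ultimately have "\<alpha> * (\<beta> * \<beta>) \<ge> 8 * 1" by (intro mult_mono) auto
    then show ?thesis by (simp add: mult_ac)
  qed
  then have Dg: "real D \<ge> 88" using D_ge by linarith
  have x0: "0 \<le> x" unfolding x_def using mpos by simp
  have x1: "x \<le> 1/2"
  proof -
    have "12 * \<beta> \<le> 8 * \<alpha>" using alpha_ge_8_beta beta_pos by linarith
    then have "(12 * \<beta>) * (\<alpha> * \<beta>) \<le> (8 * \<alpha>) * (\<alpha> * \<beta>)"
      using alpha_pos beta_pos by (intro mult_right_mono) auto
    then have "real D \<le> 2 * real m" using D_le m_eq by (simp add: mult_ac)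
    then show ?thesis unfolding x_def using mpos by (simp add: field_simps)
  qed
  have tg: "real t \<ge> 9/20 * real D"
  proof -
    have "real D \<le> real (2 * (D div 2) + 1)" unfolding of_nat_le_iff by presburger
    then show ?thesis using Dg unfolding t_def by simp
  qed
  have key: "L \<le> real t * x / 2"
  proof -
    have DD: "real D * real D \<ge> (11 * \<alpha> * \<beta> * \<beta>) * (11 * \<alpha> * \<beta> * \<beta>)"
      using D_ge alpha_pos beta_pos by (intro mult_mono) auto
    have "L * (160 * real m) = 640 * (\<alpha> * \<alpha>) * ((\<beta> * \<beta>) * (\<beta> * \<beta>))"
      using beta_cube m_eq by (simp add: algebra_simps)
    also have "\<dots> \<le> 9 * ((11 * \<alpha> * \<beta> * \<beta>) * (11 * \<alpha> * \<beta> * \<beta>))"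
      using alpha_pos beta_pos by (simp add: algebra_simps)
    also have "\<dots> \<le> 9 * (real D * real D)" using DD by (simp only: mult_le_cancel_left_pos zero_less_numeral)
    finally have "L \<le> (9/20 * real D) * x / 2" unfolding x_def using mpos by (simp add: field_simps)
    also have "\<dots> \<le> real t * x / 2" using mult_right_mono[OF tg x0] by (simp add: mult_ac)
    finally show ?thesis .
  qed
  have "hypergeometric_tail m D = (1 / (1 + x)) ^ t"
    unfolding hypergeometric_tail_def t_def x_def using mpos by (simp add: field_simps)
  also have "\<dots> \<le> exp (- (real t * x / 2))" by (rule inverse_one_plus_power_le_exp[OF x0 x1])
  also have "\<dots> \<le> exp (- (L * ln 2))"
  proof -
    have "L * ln 2 \<le> L * 1" using L_ge_2 ln_2_less_1 by (intro mult_left_mono) auto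
    then show ?thesis using key by simp
  qed
  also have "\<dots> = P" using P_eq by (simp add: powr_def)
  finally show ?thesis .
qed

lemma failure_bound_le:
  assumes "k \<le> r"
  shows "1 / 2^T + real (r - k) * (1 / 2^T + hypergeometric_tail m D) \<le> 3 * real n powr (-(c + 5/3))"
proof -
  define \<tau> where "\<tau> = hypergeometric_tail m D"
  have tau0: "\<tau> \<ge> 0" unfolding \<tau>_def hypergeometric_tail_def by simp
  have rk: "real (r - k) \<le> real r" by simp
  have r1: "real r \<ge> 1" using r2 by simp
  have "1 / 2^T + real (r - k) * (1 / 2^T + \<tau>) \<le> P + real r * (P + P)"
  proof (rule add_mono[OF inverse_two_pow_T_le_P])
    have "real (r - k) * (1 / 2^T + \<tau>) \<le> real r * (1 / 2^T + \<tau>)" using rk tau0 by (intro mult_right_mono) auto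
    also have "\<dots> \<le> real r * (P + P)" using inverse_two_pow_T_le_P hypergeometric_tail_le_P unfolding \<tau>_def by (intro mult_left_mono add_mono) auto
    finally show "real (r - k) * (1 / 2^T + \<tau>) \<le> real r * (P + P)" .
  qed
  also have "\<dots> \<le> 3 * (real r * P)"
  proof -
    have "1 * P \<le> real r * P" using r1 P_pos by (intro mult_right_mono) auto
    then show ?thesis by (simp add: algebra_simps)
  qed
  also have "real r * P \<le> \<alpha> * P"
  proof -
    have e: "real r * (4 * \<beta>) = \<alpha>" using r_eq beta_pos by (simp add: field_simps)
    have "real r * 1 \<le> real r * (4 * \<beta>)" using beta_ge_1 by (intro mult_left_mono) auto
    then have "real r \<le> \<alpha>" using e by simp
    then show ?thesis using P_pos by (intro mult_right_mono) auto
  qed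
  also have "\<alpha> * P = real n powr (-(c + 5/3))"
  proof -
    have "\<alpha> * P = real n powr (1/3 + (-(c+2)))" unfolding \<alpha>_def P_def by (simp only: powr_add)
    also have "1/3 + (-(c+2)) = -(c + 5/3)" by simp
    finally show ?thesis .
  qed
  finally show ?thesis unfolding \<tau>_def by simp
qed

end

lemma prob_factorization_event_bound:
  assumes "c > 0" "2 \<le> n" "real r = hi_r c n" "real m = hi_m c n" "\<forall>i\<in>{1..r}. real (a i) = hi_a c n i"
    and k: "k \<in> {1..r-1}" and "HS \<subseteq> {1..n}" "\<omega>0 \<in> configs n r m a"
  shows "measure_pmf.prob (pmf_of_set (configs_given n r m a k \<omega>0)) (factorization_event n r m a k HS y)
    \<ge> 1 - 3 * real n powr (-(c + 5/3))"
proof -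
  interpret P: hard_instance c n r m a
    by unfold_locales (use assms in auto)
  interpret conditioned_instance n r m a k \<omega>0 HS y P.T P.A
    by unfold_locales (use assms P.a_less_m P.a_eq_mult P.two_T_le_A P.half_D_le_m in auto)
  have "k \<le> r" using k by auto
  then show ?thesis
    using prob_factorization_event_ge P.failure_bound_le[OF \<open>k \<le> r\<close>] unfolding P.D_def by linarith
qed

theorem lemma5p6:
  fixes c :: real
  assumes "c > 0"
  shows "\<exists>N::nat. \<forall>n\<ge>N. \<forall>(r::nat) (m::nat) (a::nat \<Rightarrow> nat).
           real r = hi_r c n \<longrightarrow> real m = hi_m c n \<longrightarrow>
           (\<forall>i\<in>{1..r}. real (a i) = hi_a c n i) \<longrightarrow>
           (\<forall>k\<in>{1..r-1}. \<forall>(HS::nat set) (y::nat \<Rightarrow> bool) (\<omega>0::config).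
              HS \<subseteq> {1..n} \<longrightarrow> \<omega>0 \<in> configs n r m a \<longrightarrow>
              measure_pmf.prob (pmf_of_set (configs_given n r m a k \<omega>0))
                {\<omega>. muH n r m a \<omega> HS y =
                     (\<Prod>i\<in>{1..k}. muiH m a \<omega> i HS y) *
                     2 powr (- real (card HS)
                             + real (card (HS \<inter> (\<Union>i\<in>{1..k}. cS \<omega> i)))
                             + (\<Sum>i\<in>{k<..r}. real (a i)))}
              \<ge> 1 - 3 * real n powr (-(c + 5/3)))"
  using prob_factorization_event_bound[OF assms, unfolded factorization_event_def]
  by (intro exI[of _ 2]) blast

end
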